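(* For every even positive integer $m$, the complexes $K_{m,m}$ and $\widehat K_m$ are VH-complexes. Hence there exists a finite cover $\overline K_m\to\widehat K_m$ such that $\overline K_m$ is a special cube complex.
   Context: $G_{m,m}=\langle a_1,\dots,a_{2m+1}\mid [a_i,a_{i+1}]=1\ (1\le i\le m),\ a_{m+j+1}^{-1}a_ja_{m+j+1}=a_{m+j}\ (1\le j\le m)\rangle$, $K_{m,m}$ its presentation square complex. $\widehat K_m$ is the finite cover of $K_{m,m}$ corresponding to the stabilizer of $(0,\dots,0)$ under the following right action $\pi$ of $G_{m,m}$ on $H_{2m+1}=\{0,1\}^{2m+1}$: with $H_n\subset H_{n+1}$ (append $0$), $H_n^*\subset H_{n+1}$ (last coordinate $1$), $\beta_i$ the flip of coordinate $i$, $\varphi_{k,m+k}$ the swap of coordinates $k$, $m+k$: $\pi(a_i)=\beta_i$ on $H_{m+1}$ for $i\le m+1$; for $k=1,\dots,m$, $\pi(a_{m+k+1})=\beta_{m+k+1}$ on $H_{m+k+1}$ and $\pi(a_j)|_{H^*_{m+k}}=\beta_{m+k+1}\circ\varphi_{k,m+k}\circ\pi(a_j)|_{H_{m+k}}\circ\varphi_{k,m+k}\circ\beta_{m+k+1}$ for $j\le m+k$ (where $\pi(gh)=\pi(h)\pi(g)$). A simple square complex is a VH-complex if its edges are partitioned into vertical and horizontal classes so that each square has attaching map $vhv'h'$ with $v,v'$ vertical and $h,h'$ horizontal. A non-positively curved cube complex is special if its hyperplanes are two-sided and have no self-intersections, self-osculations or inter-osculations. *)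

theory Defs
  imports Main
begin

text \<open>A (combinatorial) square complex: vertices, oriented edges with source and
target, and squares given by their attaching map, a closed edge path of length 4.
An entry (e, True) traverses e from src to tgt, (e, False) from tgt to src.\<close>

record ('v, 'e, 's) sqc =
  V   :: "'v set"
  E   :: "'e set"
  S   :: "'s set"
  src :: "'e \<Rightarrow> 'v"
  tgt :: "'e \<Rightarrow> 'v"
  bd  :: "'s \<Rightarrow> ('e \<times> bool) list"

definition ent :: "('v,'e,'s) sqc \<Rightarrow> 's \<Rightarrow> nat \<Rightarrow> 'e \<times> bool" where
  "ent X s i = bd X s ! (i mod 4)"

text \<open>Half-edges: (e, True) is the source end of e, (e, False) its target end.
The entry (e,b) leaves from the half-edge (e,b) and arrives through (e, \<not>b).\<close>
definition hvtx :: "('v,'e,'s) sqc \<Rightarrow> 'e \<times> bool \<Rightarrow> 'v" where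
  "hvtx X h = (if snd h then src X (fst h) else tgt X (fst h))"

definition flipb :: "'e \<times> bool \<Rightarrow> 'e \<times> bool" where
  "flipb h = (fst h, \<not> snd h)"

definition sqc_wf :: "('v,'e,'s) sqc \<Rightarrow> bool" where
  "sqc_wf X \<longleftrightarrow>
     (\<forall>e\<in>E X. src X e \<in> V X \<and> tgt X e \<in> V X) \<and>
     (\<forall>s\<in>S X. length (bd X s) = 4 \<and>
        (\<forall>i<4. fst (ent X s i) \<in> E X \<and>
               hvtx X (flipb (ent X s i)) = hvtx X (ent X s (i+1))))"

definition finite_cx :: "('v,'e,'s) sqc \<Rightarrow> bool" where
  "finite_cx X \<longleftrightarrow> finite (V X) \<and> finite (E X) \<and> finite (S X)"

definition connected_cx :: "('v,'e,'s) sqc \<Rightarrow> bool" where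
  "connected_cx X \<longleftrightarrow>
     (\<forall>u\<in>V X. \<forall>w\<in>V X. (u, w) \<in> ({(src X e, tgt X e) | e. e \<in> E X} \<union>
                                    {(tgt X e, src X e) | e. e \<in> E X})\<^sup>*)"

definition is_VH :: "('v,'e,'s) sqc \<Rightarrow> bool" where
  "is_VH X \<longleftrightarrow> (\<exists>Vt Ht. Vt \<union> Ht = E X \<and> Vt \<inter> Ht = {} \<and>
     (\<forall>s\<in>S X. \<exists>k\<in>{0,1::nat}. \<forall>i<4.
         fst (ent X s (i + k)) \<in> (if even i then Vt else Ht)))"

definition corners :: "('v,'e,'s) sqc \<Rightarrow> 'v \<Rightarrow> ('s \<times> nat) set" where
  "corners X v = {(s, i). s \<in> S X \<and> i < 4 \<and> hvtx X (ent X s i) = v}"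

definition covering_map ::
  "('v,'e,'s) sqc \<Rightarrow> ('w,'f,'t) sqc \<Rightarrow> ('v \<Rightarrow> 'w) \<Rightarrow> ('e \<Rightarrow> 'f) \<Rightarrow> ('s \<Rightarrow> 't) \<Rightarrow> bool"
where
  "covering_map X Y fV fE fS \<longleftrightarrow>
     fV ` V X \<subseteq> V Y \<and> fE ` E X \<subseteq> E Y \<and> fS ` S X \<subseteq> S Y \<and>
     (\<forall>e\<in>E X. src Y (fE e) = fV (src X e) \<and> tgt Y (fE e) = fV (tgt X e)) \<and>
     (\<forall>s\<in>S X. bd Y (fS s) = map (\<lambda>(e, b). (fE e, b)) (bd X s)) \<and>
     (\<forall>v\<in>V X.
        bij_betw fE {e\<in>E X. src X e = v} {e\<in>E Y. src Y e = fV v} \<and>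
        bij_betw fE {e\<in>E X. tgt X e = v} {e\<in>E Y. tgt Y e = fV v} \<and>
        bij_betw (\<lambda>(s, i). (fS s, i)) (corners X v) (corners Y (fV v)))"

definition finite_cover ::
  "('v,'e,'s) sqc \<Rightarrow> ('w,'f,'t) sqc \<Rightarrow> ('v \<Rightarrow> 'w) \<Rightarrow> ('e \<Rightarrow> 'f) \<Rightarrow> ('s \<Rightarrow> 't) \<Rightarrow> bool"
where
  "finite_cover X Y fV fE fS \<longleftrightarrow>
     sqc_wf X \<and> finite_cx X \<and> V X \<noteq> {} \<and> connected_cx X \<and> covering_map X Y fV fE fS"

text \<open>Link: vertices are half-edges, each corner (s,i) gives a link edge joining
the arrival half-edge of entry i-1 and the departure half-edge of entry i.\<close>
definition corner_ends :: "('v,'e,'s) sqc \<Rightarrow> 's \<Rightarrow> nat \<Rightarrow> ('e \<times> bool) set" where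
  "corner_ends X s i = {flipb (ent X s (i + 3)), ent X s i}"

definition lnk :: "('v,'e,'s) sqc \<Rightarrow> 'e \<times> bool \<Rightarrow> 'e \<times> bool \<Rightarrow> bool" where
  "lnk X h h' \<longleftrightarrow> (\<exists>s\<in>S X. \<exists>i<4. corner_ends X s i = {h, h'})"

text \<open>Gromov's link condition for square complexes: all links are simplicial
(no loops, no multiple edges) and flag (no 3-cycles).\<close>
definition npc :: "('v,'e,'s) sqc \<Rightarrow> bool" where
  "npc X \<longleftrightarrow>
     (\<forall>s\<in>S X. \<forall>i<4. flipb (ent X s (i + 3)) \<noteq> ent X s i) \<and>
     (\<forall>s\<in>S X. \<forall>i<4. \<forall>s'\<in>S X. \<forall>i'<4.
         corner_ends X s i = corner_ends X s' i' \<longrightarrow> (s, i) = (s', i')) \<and>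
     \<not> (\<exists>h1 h2 h3. h1 \<noteq> h2 \<and> h2 \<noteq> h3 \<and> h1 \<noteq> h3 \<and>
           lnk X h1 h2 \<and> lnk X h2 h3 \<and> lnk X h1 h3)"

text \<open>Hyperplanes: equivalence classes of edges under the relation generated by
being opposite sides of a square.\<close>
definition opp :: "('v,'e,'s) sqc \<Rightarrow> ('e \<times> 'e) set" where
  "opp X = {(fst (ent X s i), fst (ent X s (i + 2))) | s i. s \<in> S X \<and> i < 4}"

definition hyp :: "('v,'e,'s) sqc \<Rightarrow> ('e \<times> 'e) set" where
  "hyp X = (opp X \<union> (opp X)\<inverse>)\<^sup>*"

text \<open>Edges e, f are consecutive sides of a square (so their hyperplanes cross
in that square).\<close>
definition consec :: "('v,'e,'s) sqc \<Rightarrow> 'e \<Rightarrow> 'e \<Rightarrow> bool" where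
  "consec X e f \<longleftrightarrow> (\<exists>s\<in>S X. \<exists>i<4. fst (ent X s i) = e \<and>
       (fst (ent X s (i + 1)) = f \<or> fst (ent X s (i + 3)) = f))"

definition in_common_sq :: "('v,'e,'s) sqc \<Rightarrow> 'e \<Rightarrow> 'e \<Rightarrow> bool" where
  "in_common_sq X e f \<longleftrightarrow> (\<exists>s\<in>S X. \<exists>i<4. \<exists>j<4. fst (ent X s i) = e \<and> fst (ent X s j) = f)"

definition share_vertex :: "('v,'e,'s) sqc \<Rightarrow> 'e \<Rightarrow> 'e \<Rightarrow> bool" where
  "share_vertex X e f \<longleftrightarrow> {src X e, tgt X e} \<inter> {src X f, tgt X f} \<noteq> {}"

text \<open>An orientation o of the edges (o e = True keeps the orientation of e) is
a transverse orientation of all hyperplanes if opposite sides of every square are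
parallel; such an o exists iff all hyperplanes are two-sided.\<close>
definition two_sided_by :: "('v,'e,'s) sqc \<Rightarrow> ('e \<Rightarrow> bool) \<Rightarrow> bool" where
  "two_sided_by X ori \<longleftrightarrow> (\<forall>s\<in>S X. \<forall>i<4.
      (snd (ent X s i) = ori (fst (ent X s i))) \<noteq>
      (snd (ent X s (i + 2)) = ori (fst (ent X s (i + 2)))))"

definition ostart :: "('v,'e,'s) sqc \<Rightarrow> ('e \<Rightarrow> bool) \<Rightarrow> 'e \<Rightarrow> 'v" where
  "ostart X ori e = (if ori e then src X e else tgt X e)"

definition oend :: "('v,'e,'s) sqc \<Rightarrow> ('e \<Rightarrow> bool) \<Rightarrow> 'e \<Rightarrow> 'v" where
  "oend X ori e = (if ori e then tgt X e else src X e)"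

definition self_intersects :: "('v,'e,'s) sqc \<Rightarrow> bool" where
  "self_intersects X \<longleftrightarrow> (\<exists>e\<in>E X. \<exists>f\<in>E X. (e, f) \<in> hyp X \<and> consec X e f)"

definition direct_self_osc :: "('v,'e,'s) sqc \<Rightarrow> ('e \<Rightarrow> bool) \<Rightarrow> bool" where
  "direct_self_osc X ori \<longleftrightarrow> (\<exists>e\<in>E X. \<exists>f\<in>E X. e \<noteq> f \<and> (e, f) \<in> hyp X \<and>
      (ostart X ori e = ostart X ori f \<or> oend X ori e = oend X ori f) \<and> \<not> in_common_sq X e f)"

definition inter_osc :: "('v,'e,'s) sqc \<Rightarrow> bool" where
  "inter_osc X \<longleftrightarrow> (\<exists>e1\<in>E X. \<exists>e2\<in>E X. \<exists>f1\<in>E X. \<exists>f2\<in>E X.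
      (e1, f1) \<in> hyp X \<and> (e2, f2) \<in> hyp X \<and> (e1, e2) \<notin> hyp X \<and>
      consec X e1 e2 \<and> share_vertex X f1 f2 \<and> \<not> in_common_sq X f1 f2)"

definition special :: "('v,'e,'s) sqc \<Rightarrow> bool" where
  "special X \<longleftrightarrow> sqc_wf X \<and> npc X \<and>
     (\<exists>ori. two_sided_by X ori \<and> \<not> direct_self_osc X ori) \<and>
     \<not> self_intersects X \<and> \<not> inter_osc X"

text \<open>Relators of G_{m,m}, as words in generators 1..2m+1 (True = exponent +1).
Relator r (1 \<le> r \<le> m): [a_r, a_{r+1}] = a_r a_{r+1} a_r^{-1} a_{r+1}^{-1};
relator m+j (1 \<le> j \<le> m): a_{m+j+1}^{-1} a_j a_{m+j+1} a_{m+j}^{-1}.\<close>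
definition rel :: "nat \<Rightarrow> nat \<Rightarrow> (nat \<times> bool) list" where
  "rel m r = (if r \<le> m then [(r, True), (r+1, True), (r, False), (r+1, False)]
              else [(r+1, False), (r-m, True), (r+1, True), (r, False)])"

definition Kmm :: "nat \<Rightarrow> (unit, nat, nat) sqc" where
  "Kmm m = \<lparr> V = {()}, E = {1..2*m+1}, S = {1..2*m},
             src = (\<lambda>_. ()), tgt = (\<lambda>_. ()), bd = rel m \<rparr>"

text \<open>Points of H_n are functions nat \<Rightarrow> bool (coordinates 1..n).\<close>
definition flipc :: "nat \<Rightarrow> (nat \<Rightarrow> bool) \<Rightarrow> (nat \<Rightarrow> bool)" where
  "flipc i x = x(i := \<not> x i)"

definition swapc :: "nat \<Rightarrow> nat \<Rightarrow> (nat \<Rightarrow> bool) \<Rightarrow> (nat \<Rightarrow> bool)" where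
  "swapc k l x = x(k := x l, l := x k)"

text \<open>piL m n j = \<pi>(a_j) on H_n, for m+1 \<le> n \<le> 2m+1 and j \<le> n (n = m+k+1).\<close>
function piL :: "nat \<Rightarrow> nat \<Rightarrow> nat \<Rightarrow> (nat \<Rightarrow> bool) \<Rightarrow> (nat \<Rightarrow> bool)" where
  "piL m n j x =
     (if n \<le> m + 1 then flipc j x
      else if j = n then flipc n x
      else if \<not> x n then piL m (n - 1) j x
      else (let k = n - 1 - m in
            flipc n (swapc k (n - 1) (piL m (n - 1) j (swapc k (n - 1) (flipc n x))))))"
  by auto
termination by (relation "measure (\<lambda>(m, n, j, x). n)") auto

definition piA :: "nat \<Rightarrow> nat \<Rightarrow> (nat \<Rightarrow> bool) \<Rightarrow> (nat \<Rightarrow> bool)" where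
  "piA m j = piL m (2*m+1) j"

text \<open>Orbit of (0,...,0) under the right action; it is in bijection with the
cosets of the stabilizer.\<close>
inductive_set orbit0 :: "nat \<Rightarrow> (nat \<Rightarrow> bool) set" for m where
  base: "(\<lambda>_. False) \<in> orbit0 m"
| step: "x \<in> orbit0 m \<Longrightarrow> j \<in> {1..2*m+1} \<Longrightarrow> piA m j x \<in> orbit0 m"

fun walk :: "'x set \<Rightarrow> (nat \<Rightarrow> 'x \<Rightarrow> 'x) \<Rightarrow> 'x \<Rightarrow> (nat \<times> bool) list \<Rightarrow> (('x \<times> nat) \<times> bool) list" where
  "walk Ob act c [] = []"
| "walk Ob act c ((g, b) # w) =
     (if b then ((c, g), True) # walk Ob act (act g c) w
      else (let d = inv_into Ob (act g) c in ((d, g), False) # walk Ob act d w))"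

text \<open>The cover of the presentation complex associated with a right action on Ob:
vertices Ob, an edge (x, i) from x to x.a_i, and a square (x, r) for each relator r
read from x.\<close>
definition action_cx :: "nat \<Rightarrow> (nat \<Rightarrow> (nat \<times> bool) list) \<Rightarrow> nat \<Rightarrow> 'x set \<Rightarrow>
     (nat \<Rightarrow> 'x \<Rightarrow> 'x) \<Rightarrow> ('x, 'x \<times> nat, 'x \<times> nat) sqc" where
  "action_cx n R nr Ob act = \<lparr> V = Ob, E = Ob \<times> {1..n}, S = Ob \<times> {1..nr},
      src = fst, tgt = (\<lambda>(x, i). act i x), bd = (\<lambda>(x, r). walk Ob act x (R r)) \<rparr>"

definition Khat :: "nat \<Rightarrow> (nat \<Rightarrow> bool, (nat \<Rightarrow> bool) \<times> nat, (nat \<Rightarrow> bool) \<times> nat) sqc" where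
  "Khat m = action_cx (2*m+1) (rel m) (2*m) (orbit0 m) (piA m)"

end

theory Submission
  imports Defs "HOL-Library.Countable_Set"
begin

(*
  The action \<pi> of G_{m,m} on {0,1}^{2m+1} is by single coordinate flips: a_i flips
  coordinate i or its partner i \<plusminus> m, which one depending on the point. Hence \<widehat>K_m
  embeds in a cube: every edge changes one coordinate, and every square spans a 2-face whose
  two coordinates, after identifying i with i + m, are adjacent in a fixed graph on
  {1, ..., m + 1} (an m-cycle with a pendant vertex), which is triangle-free for even m.
  In such a complex a hyperplane has constant coordinate and a rigid position off the
  neighbouring coordinates, so it cannot self-intersect or osculate, and triangle-freeness
  rules out inter-osculation; links are bipartite for the parity colouring of the generators,
  which also gives the VH-structures. So \<widehat>K_m is itself special, and the cover is a copy
  of it with vertices, edges and squares relabelled by natural numbers.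
*)

section \<open>A closed form of the action \<open>\<pi>\<close>\<close>

lemma flipc_flipc [simp]: "flipc c (flipc c x) = x"
  unfolding flipc_def by auto

lemma flipc_apply: "flipc c x k = (if k = c then \<not> x c else x k)"
  unfolding flipc_def by auto

lemma flipc_commute: "flipc a (flipc b x) = flipc b (flipc a x)"
  unfolding flipc_def by (rule ext) auto

lemma swapc_flipc:
  "swapc a b (flipc c x) = flipc (if c = a then b else if c = b then a else c) (swapc a b x)"
  unfolding swapc_def flipc_def by (rule ext) auto

lemma swapc_swapc [simp]: "swapc a b (swapc a b x) = x"
  unfolding swapc_def by (rule ext) auto

lemma eq_flipc_if_agree_off:
  assumes "\<And>k. k \<noteq> c \<Longrightarrow> x k = y k"
  shows "x = y \<or> x = flipc c y"
proof (cases "x c = y c")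
  case True
  have "x = y" using assms True by (intro ext) metis
  then show ?thesis ..
next
  case False
  have "x = flipc c y" using assms False by (intro ext) (auto simp: flipc_apply)
  then show ?thesis ..
qed

text \<open>Unfolding the recursion of \<open>piL\<close>, \<open>\<pi>(a\<^sub>i)\<close> flips a single coordinate, and the
conjugations by \<open>\<phi>\<^sub>k\<^sub>,\<^sub>m\<^sub>+\<^sub>k\<close> only decide whether it is \<open>i\<close> or its partner. The bit
\<open>twistL m n k x\<close> records whether the pair \<open>k\<close>, \<open>m + k\<close> ends up exchanged at \<open>x\<close>; it depends on
the bits of the higher pairs, whence the recursion in \<open>k\<close>.\<close>

function twistL :: "nat \<Rightarrow> nat \<Rightarrow> nat \<Rightarrow> (nat \<Rightarrow> bool) \<Rightarrow> bool" where
  "twistL m n k x = (if n - Suc m \<le> k then x n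
     else if twistL m n (Suc k) x then x (Suc k) else x (m + Suc k))"
  by auto
termination by (relation "measure (\<lambda>(m, n, k, x). n - Suc m - k)") auto

declare twistL.simps [simp del]

definition flip_coordL :: "nat \<Rightarrow> nat \<Rightarrow> nat \<Rightarrow> (nat \<Rightarrow> bool) \<Rightarrow> nat" where
  "flip_coordL m n i x = (if i = n then n
     else if i \<le> m then (if i \<le> n - Suc m \<and> twistL m n i x then m + i else i)
     else (if twistL m n (i - m) x then i - m else i))"

lemma twistL_top_unset:
  assumes "\<not> x n" "k \<le> n - Suc m - 1" "Suc m < n"
  shows "twistL m n k x = twistL m (n - 1) k x"
  using assms
proof (induction "n - Suc m - 1 - k" arbitrary: k)
  case 0
  then have k: "k = n - Suc m - 1" by simp
  have "twistL m n (Suc k) x = x n" using k 0 by (subst twistL.simps) auto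
  then have "twistL m n k x = x (n - 1)" using 0 k by (subst twistL.simps) (auto simp: Suc_diff_Suc)
  moreover have "twistL m (n - 1) k x = x (n - 1)" using k 0 by (subst twistL.simps) auto
  ultimately show ?case by simp
next
  case (Suc d)
  have "twistL m n k x = (if twistL m n (Suc k) x then x (Suc k) else x (m + Suc k))"
    using Suc by (subst twistL.simps) auto
  moreover have
    "twistL m (n - 1) k x = (if twistL m (n - 1) (Suc k) x then x (Suc k) else x (m + Suc k))"
    using Suc by (subst twistL.simps) auto
  moreover have "twistL m n (Suc k) x = twistL m (n - 1) (Suc k) x" using Suc by auto
  ultimately show ?case by simp
qed

lemma twistL_top_set:
  assumes "x n" "k \<le> n - Suc m - 1" "Suc m < n" "n \<le> 2 * m + 1"
  shows "twistL m n k x = twistL m (n - 1) k (swapc (n - Suc m) (n - 1) (flipc n x))"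
  using assms
proof (induction "n - Suc m - 1 - k" arbitrary: k)
  case 0
  then have k: "k = n - Suc m - 1" by simp
  have "twistL m n (Suc k) x = x n" using k 0 by (subst twistL.simps) auto
  then have "twistL m n k x = x (n - Suc m)" using 0 k by (subst twistL.simps) (auto simp: Suc_diff_Suc)
  moreover have "twistL m (n - 1) k (swapc (n - Suc m) (n - 1) (flipc n x)) = x (n - Suc m)"
    using k 0 by (subst twistL.simps) (auto simp: swapc_def flipc_def)
  ultimately show ?case by simp
next
  case (Suc d)
  let ?y = "swapc (n - Suc m) (n - 1) (flipc n x)"
  have "twistL m n k x = (if twistL m n (Suc k) x then x (Suc k) else x (m + Suc k))"
    using Suc by (subst twistL.simps) auto
  moreover have
    "twistL m (n - 1) k ?y = (if twistL m (n - 1) (Suc k) ?y then ?y (Suc k) else ?y (m + Suc k))"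
    using Suc by (subst twistL.simps) auto
  moreover have "twistL m n (Suc k) x = twistL m (n - 1) (Suc k) ?y" using Suc by auto
  moreover have "?y (Suc k) = x (Suc k)" "?y (m + Suc k) = x (m + Suc k)"
    using Suc by (auto simp: swapc_def flipc_def)
  ultimately show ?case by simp
qed

lemma flip_coordL_top_unset:
  assumes "\<not> x n" "Suc (Suc m) \<le> n" "1 \<le> j" "j < n"
  shows "flip_coordL m n j x = flip_coordL m (n - 1) j x"
proof -
  have top: "\<not> twistL m n (n - Suc m) x" using assms(1) by (subst twistL.simps) auto
  have tw: "\<And>k. k \<le> n - Suc m - 1 \<Longrightarrow> twistL m n k x = twistL m (n - 1) k x"
    using twistL_top_unset[of x n _ m, OF assms(1)] assms(2) by auto
  consider "j \<le> m" "j < n - Suc m" | "j \<le> m" "j = n - Suc m" | "j \<le> m" "j > n - Suc m"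
    | "j > m" "j = n - 1" | "j > m" "j < n - 1"
    using assms by linarith
  then show ?thesis
  proof cases
    case 1
    then have "j \<noteq> n" "j \<noteq> n - 1" "j \<le> n - 1 - Suc m" "j \<le> n - Suc m" using assms by auto
    then show ?thesis using 1 tw[of j] unfolding flip_coordL_def by simp
  next
    case 2
    then have "j \<noteq> n" "j \<noteq> n - 1" "\<not> j \<le> n - 1 - Suc m" "j \<le> n - Suc m" using assms by auto
    then show ?thesis using 2 top unfolding flip_coordL_def by simp
  next
    case 3
    then have "j \<noteq> n" "j \<noteq> n - 1" "\<not> j \<le> n - 1 - Suc m" "\<not> j \<le> n - Suc m" using assms by auto
    then show ?thesis using 3 unfolding flip_coordL_def by simp
  next
    case 4
    then have "j - m = n - Suc m" "j \<noteq> n" "\<not> j \<le> m" using assms by auto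
    then show ?thesis using 4 top unfolding flip_coordL_def by simp
  next
    case 5
    then have "j - m \<le> n - Suc m - 1" "j \<noteq> n" "j \<noteq> n - 1" "\<not> j \<le> m" using assms by auto
    then show ?thesis using 5 tw[of "j - m"] unfolding flip_coordL_def by simp
  qed
qed

lemma flip_coordL_top_set:
  assumes "x n" "Suc (Suc m) \<le> n" "n \<le> 2 * m + 1" "1 \<le> j" "j < n"
  defines "c \<equiv> flip_coordL m (n - 1) j (swapc (n - Suc m) (n - 1) (flipc n x))"
  shows "flip_coordL m n j x = (if c = n - Suc m then n - 1 else if c = n - 1 then n - Suc m else c)"
proof -
  let ?y = "swapc (n - Suc m) (n - 1) (flipc n x)"
  have top: "twistL m n (n - Suc m) x" using assms(1) by (subst twistL.simps) auto
  have tw: "\<And>k. k \<le> n - Suc m - 1 \<Longrightarrow> twistL m n k x = twistL m (n - 1) k ?y"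
    using twistL_top_set[of x n _ m, OF assms(1)] assms(2,3) by auto
  consider "j \<le> m" "j < n - Suc m" | "j \<le> m" "j = n - Suc m" | "j \<le> m" "j > n - Suc m"
    | "j > m" "j = n - 1" | "j > m" "j < n - 1"
    using assms by linarith
  then show ?thesis
  proof cases
    case 1
    then have "j \<noteq> n" "j \<noteq> n - 1" "j \<le> n - 1 - Suc m" "j \<le> n - Suc m" "j \<noteq> n - Suc m"
      "m + j \<noteq> n - 1" "m + j \<noteq> n - Suc m" using assms by auto
    then show ?thesis using 1 tw[of j] unfolding flip_coordL_def c_def by simp
  next
    case 2
    then have "j \<noteq> n" "j \<noteq> n - 1" "\<not> j \<le> n - 1 - Suc m" "j \<le> n - Suc m" using assms by auto
    then show ?thesis using 2 top unfolding flip_coordL_def c_def by simp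
  next
    case 3
    then have "j \<noteq> n" "j \<noteq> n - 1" "\<not> j \<le> n - 1 - Suc m" "\<not> j \<le> n - Suc m" "j \<noteq> n - Suc m"
      using assms by auto
    then show ?thesis using 3 unfolding flip_coordL_def c_def by simp
  next
    case 4
    then have "j - m = n - Suc m" "j \<noteq> n" "\<not> j \<le> m" using assms by auto
    then show ?thesis using 4 top unfolding flip_coordL_def c_def by simp
  next
    case 5
    then have "j - m \<le> n - Suc m - 1" "j \<noteq> n" "j \<noteq> n - 1" "\<not> j \<le> m" "j - m \<noteq> n - Suc m"
      "j \<noteq> n - Suc m" "j - m \<noteq> n - 1" using assms by auto
    then show ?thesis using 5 tw[of "j - m"] unfolding flip_coordL_def c_def by simp
  qed
qed

declare piL.simps [simp del]

lemma piL_eq_flipc: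
  "Suc m \<le> n \<Longrightarrow> n \<le> 2 * m + 1 \<Longrightarrow> 1 \<le> i \<Longrightarrow> i \<le> n \<Longrightarrow>
    piL m n i x = flipc (flip_coordL m n i x) x"
proof (induction m n i x rule: piL.induct)
  case (1 m n j x)
  consider "n \<le> m + 1" | "\<not> n \<le> m + 1" "j = n" | "\<not> n \<le> m + 1" "j \<noteq> n" "\<not> x n"
    | "\<not> n \<le> m + 1" "j \<noteq> n" "x n"
    by blast
  then show ?case
  proof cases
    case 1
    then show ?thesis using "1.prems" by (subst piL.simps) (auto simp: flip_coordL_def)
  next
    case 2
    then show ?thesis by (subst piL.simps) (auto simp: flip_coordL_def)
  next
    case 3
    then have "piL m (n - 1) j x = flipc (flip_coordL m (n - 1) j x) x"
      using "1.IH"(1) "1.prems" by auto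
    moreover have "flip_coordL m n j x = flip_coordL m (n - 1) j x"
      using flip_coordL_top_unset[of x n m j] 3 "1.prems" by auto
    ultimately show ?thesis using 3 by (subst piL.simps) auto
  next
    case 4
    let ?k = "n - 1 - m"
    let ?y = "swapc ?k (n - 1) (flipc n x)"
    let ?c = "flip_coordL m (n - 1) j ?y"
    have IH: "piL m (n - 1) j ?y = flipc ?c ?y"
      using "1.IH"(2)[of ?k] 4 "1.prems" by auto
    have "piL m n j x = flipc n (swapc ?k (n - 1) (piL m (n - 1) j ?y))"
      using 4 by (subst piL.simps) (simp add: Let_def)
    also have "\<dots> = flipc n (swapc ?k (n - 1) (flipc ?c ?y))" using IH by simp
    also have "\<dots> = flipc n (flipc (if ?c = ?k then n - 1 else if ?c = n - 1 then ?k else ?c) (flipc n x))"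
      by (simp add: swapc_flipc)
    also have "\<dots> = flipc (flip_coordL m n j x) x"
      using flip_coordL_top_set[of x n m j] 4 "1.prems" by (simp add: flipc_commute)
    finally show ?thesis .
  qed
qed

definition twist :: "nat \<Rightarrow> nat \<Rightarrow> (nat \<Rightarrow> bool) \<Rightarrow> bool" where
  "twist m k x = twistL m (2 * m + 1) k x"

definition flip_coord :: "nat \<Rightarrow> nat \<Rightarrow> (nat \<Rightarrow> bool) \<Rightarrow> nat" where
  "flip_coord m i x = flip_coordL m (2 * m + 1) i x"

lemma piA_eq_flipc: "1 \<le> i \<Longrightarrow> i \<le> 2 * m + 1 \<Longrightarrow> piA m i x = flipc (flip_coord m i x) x"
  unfolding piA_def flip_coord_def by (rule piL_eq_flipc) auto

lemma twist_rec: "twist m k x = (if m \<le> k then x (2 * m + 1)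
    else if twist m (Suc k) x then x (Suc k) else x (m + Suc k))"
  unfolding twist_def by (subst twistL.simps) simp

lemma twist_top: "m \<le> k \<Longrightarrow> twist m k x = x (2 * m + 1)"
  by (subst twist_rec) simp

lemma twist_step: "k < m \<Longrightarrow> twist m k x = (if twist m (Suc k) x then x (Suc k) else x (m + Suc k))"
  by (subst twist_rec) simp

lemma flip_coord_low: "1 \<le> i \<Longrightarrow> i \<le> m \<Longrightarrow> flip_coord m i x = (if twist m i x then m + i else i)"
  unfolding flip_coord_def flip_coordL_def twist_def by auto

lemma flip_coord_high:
  "m < i \<Longrightarrow> i \<le> 2 * m \<Longrightarrow> flip_coord m i x = (if twist m (i - m) x then i - m else i)"
  unfolding flip_coord_def flip_coordL_def twist_def by auto

lemma flip_coord_last: "i = 2 * m + 1 \<Longrightarrow> flip_coord m i x = i"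
  unfolding flip_coord_def flip_coordL_def by auto

lemma flip_coord_cases:
  assumes "1 \<le> i" "i \<le> 2 * m + 1"
  shows "flip_coord m i x = i \<or> (i \<le> m \<and> flip_coord m i x = m + i) \<or>
    (m < i \<and> i \<le> 2 * m \<and> flip_coord m i x = i - m)"
  using assms by (cases "i \<le> m"; cases "i \<le> 2 * m")
    (auto simp: flip_coord_low flip_coord_high flip_coord_last)

lemma flip_coord_range: "1 \<le> i \<Longrightarrow> i \<le> 2 * m + 1 \<Longrightarrow> flip_coord m i x \<in> {1..2 * m + 1}"
  using flip_coord_cases[of i m x] by auto

text \<open>The generators \<open>a\<^sub>i\<close> and \<open>a\<^sub>m\<^sub>+\<^sub>i\<close> (\<open>i \<le> m\<close>) flip one of the coordinates \<open>i\<close>, \<open>m + i\<close>;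
\<open>base_coord\<close> forgets which.\<close>

definition base_coord :: "nat \<Rightarrow> nat \<Rightarrow> nat" where
  "base_coord m c = (if c \<le> m then c else if c \<le> 2 * m then c - m else m + 1)"

lemma base_coord_flip_coord:
  "1 \<le> i \<Longrightarrow> i \<le> 2 * m + 1 \<Longrightarrow> base_coord m (flip_coord m i x) = base_coord m i"
  using flip_coord_cases[of i m x] unfolding base_coord_def by auto

lemma flip_coord_inj:
  assumes "1 \<le> i" "i \<le> 2 * m + 1" "1 \<le> i'" "i' \<le> 2 * m + 1"
    and "flip_coord m i x = flip_coord m i' x"
  shows "i = i'"
proof -
  have "base_coord m i = base_coord m i'"
    using assms base_coord_flip_coord by metis
  then show ?thesis using assms
    by (cases "i \<le> m"; cases "i \<le> 2 * m"; cases "i' \<le> m"; cases "i' \<le> 2 * m")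
       (auto simp: base_coord_def flip_coord_low flip_coord_high flip_coord_last split: if_splits)
qed

lemma twist_cong:
  assumes "\<And>c. k < c \<Longrightarrow> c \<le> m \<Longrightarrow> x c = y c"
    and "\<And>c. m + k < c \<Longrightarrow> c \<le> 2 * m \<Longrightarrow> x c = y c"
    and "x (2 * m + 1) = y (2 * m + 1)"
  shows "twist m k x = twist m k y"
  using assms
proof (induction "m - k" arbitrary: k)
  case 0
  then show ?case by (simp add: twist_top)
next
  case (Suc d)
  then have "k < m" "twist m (Suc k) x = twist m (Suc k) y" by auto
  moreover have "x (Suc k) = y (Suc k)" "x (m + Suc k) = y (m + Suc k)" using Suc \<open>k < m\<close> by simp_all
  ultimately show ?case by (simp add: twist_step)
qed

lemma twist_flipc_below:
  assumes "c = j \<or> c = m + j" "j \<le> k" "1 \<le> j" "j \<le> m"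
  shows "twist m k (flipc c x) = twist m k x"
  by (rule twist_cong) (use assms in \<open>auto simp: flipc_def\<close>)

lemma twist_flip_coord_low:
  assumes "1 \<le> j" "j \<le> m"
  shows "twist m k (flipc (flip_coord m j x) x) = twist m k x"
proof -
  let ?y = "flipc (flip_coord m j x) x"
  have below: "twist m k ?y = twist m k x" if "j \<le> k" for k
    using assms that by (intro twist_flipc_below[of _ j]) (auto simp: flip_coord_low)
  have "twist m (j - 1 - d) ?y = twist m (j - 1 - d) x" if "d < j" for d
    using that
  proof (induction d)
    case 0
    have "twist m (j - 1) ?y = (if twist m j ?y then ?y j else ?y (m + j))"
      using assms twist_step[of "j - 1" m ?y] by simp
    also have "\<dots> = (if twist m j x then x j else x (m + j))"
      using below[of j] assms by (auto simp: flip_coord_low flipc_def)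
    also have "\<dots> = twist m (j - 1) x" using assms twist_step[of "j - 1" m x] by simp
    finally show ?case by simp
  next
    case (Suc d)
    then have "twist m (Suc (j - 1 - Suc d)) ?y = twist m (Suc (j - 1 - Suc d)) x"
      by (simp add: Suc_diff_Suc)
    moreover have "?y (Suc (j - 1 - Suc d)) = x (Suc (j - 1 - Suc d))"
      "?y (m + Suc (j - 1 - Suc d)) = x (m + Suc (j - 1 - Suc d))"
      using assms Suc by (auto simp: flip_coord_low flipc_def)
    ultimately show ?case using assms Suc by (simp add: twist_step)
  qed
  from this[of "j - 1 - k"] below[of k] show ?thesis by (cases "j \<le> k") auto
qed

lemma twist_flip_coord_high:
  assumes "j < m"
  shows "twist m j (flipc (flip_coord m (m + Suc j) x) x) = (\<not> twist m j x)"
proof -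
  have c: "flip_coord m (m + Suc j) x = (if twist m (Suc j) x then Suc j else m + Suc j)"
    using assms by (simp add: flip_coord_high)
  have "twist m (Suc j) (flipc (flip_coord m (m + Suc j) x) x) = twist m (Suc j) x"
    using c assms by (intro twist_flipc_below[of _ "Suc j"]) auto
  then show ?thesis using assms c by (simp add: twist_step[of j m] flipc_def)
qed

lemma flip_coord_cong: "(\<And>k. twist m k y = twist m k x) \<Longrightarrow> flip_coord m i y = flip_coord m i x"
  unfolding flip_coord_def flip_coordL_def by (simp add: twist_def)

lemma flip_coord_invol:
  assumes "1 \<le> i" "i \<le> 2 * m + 1"
  shows "flip_coord m i (flipc (flip_coord m i x) x) = flip_coord m i x"
proof -
  consider "i \<le> m" | "m < i" "i \<le> 2 * m" | "i = 2 * m + 1" using assms by linarith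
  then show ?thesis
  proof cases
    case 1
    then have "twist m i (flipc (flip_coord m i x) x) = twist m i x"
      using assms by (intro twist_flipc_below[of _ i]) (auto simp: flip_coord_low)
    then show ?thesis using 1 assms by (simp add: flip_coord_low)
  next
    case 2
    then have "twist m (i - m) (flipc (flip_coord m i x) x) = twist m (i - m) x"
      by (intro twist_flipc_below[of _ "i - m"]) (auto simp: flip_coord_high)
    then show ?thesis using 2 by (simp add: flip_coord_high)
  qed (simp add: flip_coord_last)
qed

lemma piA_invol: "1 \<le> i \<Longrightarrow> i \<le> 2 * m + 1 \<Longrightarrow> piA m i (piA m i x) = x"
  by (simp add: piA_eq_flipc flip_coord_invol)

text \<open>Coordinate form of the relations \<open>[a\<^sub>r, a\<^sub>r\<^sub>+\<^sub>1] = 1\<close> and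
\<open>a\<^sub>m\<^sub>+\<^sub>j\<^sub>+\<^sub>1\<^sup>-\<^sup>1 a\<^sub>j a\<^sub>m\<^sub>+\<^sub>j\<^sub>+\<^sub>1 = a\<^sub>m\<^sub>+\<^sub>j\<close>.\<close>

lemma flip_coord_after_succ:
  assumes "1 \<le> r" "r \<le> m"
  shows "flip_coord m r (flipc (flip_coord m (Suc r) x) x) = flip_coord m r x"
proof (cases "r < m")
  case True
  then show ?thesis using assms by (intro flip_coord_cong twist_flip_coord_low) auto
next
  case False
  then have "r = m" using assms by simp
  moreover have "flip_coord m (Suc m) x = (if twist m 1 x then 1 else m + 1)"
    using assms by (simp add: flip_coord_high)
  ultimately have "twist m m (flipc (flip_coord m (Suc r) x) x) = twist m m x"
    using assms by (intro twist_flipc_below[of _ 1]) auto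
  then show ?thesis using \<open>r = m\<close> assms by (simp add: flip_coord_low)
qed

lemma flip_coord_succ_after:
  assumes "1 \<le> r" "r \<le> m"
  shows "flip_coord m (Suc r) (flipc (flip_coord m r x) x) = flip_coord m (Suc r) x"
  using assms by (intro flip_coord_cong twist_flip_coord_low) auto

lemma flip_coord_conj:
  assumes "1 \<le> j" "j \<le> m"
  shows "flip_coord m j (flipc (flip_coord m (m + Suc j) x) x) = flip_coord m (m + j) x"
proof (cases "j < m")
  case True
  then have "twist m j (flipc (flip_coord m (m + Suc j) x) x) = (\<not> twist m j x)"
    by (rule twist_flip_coord_high)
  then show ?thesis using assms by (simp add: flip_coord_low flip_coord_high)
next
  case False
  then have "j = m" using assms by simp
  then have "twist m m (flipc (flip_coord m (m + Suc m) x) x) = (\<not> twist m m x)"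
    by (simp add: flip_coord_last twist_top flipc_def mult_2)
  then show ?thesis using assms \<open>j = m\<close> by (simp add: flip_coord_low flip_coord_high)
qed

lemma flip_coord_conj_back:
  assumes "1 \<le> j" "j \<le> m"
  shows "flip_coord m (m + Suc j) (flipc (flip_coord m (m + j) x) (flipc (flip_coord m (m + Suc j) x) x))
    = flip_coord m (m + Suc j) x"
proof (cases "j < m")
  case True
  let ?y = "flipc (flip_coord m (m + Suc j) x) x"
  have "twist m (Suc j) ?y = twist m (Suc j) x"
    using True assms by (intro twist_flipc_below[of _ "Suc j"]) (auto simp: flip_coord_high)
  moreover have "twist m (Suc j) (flipc (flip_coord m (m + j) x) ?y) = twist m (Suc j) ?y"
    using assms by (intro twist_flipc_below[of _ j]) (auto simp: flip_coord_high)
  ultimately show ?thesis using True assms by (simp add: flip_coord_high)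
qed (use assms in \<open>simp add: flip_coord_last\<close>)

section \<open>A criterion for specialness\<close>

abbreviation side :: "('v, 'e, 's) sqc \<Rightarrow> 's \<Rightarrow> nat \<Rightarrow> 'e" where
  "side X s i \<equiv> fst (ent X s i)"

lemma less_4_cases: "(r::nat) < 4 \<Longrightarrow> r = 0 \<or> r = 1 \<or> r = 2 \<or> r = 3"
  by auto

lemma ent_mod_4: "ent X s (i mod 4) = ent X s i"
  unfolding ent_def by simp

lemma ent_add_3_1: "ent X s (i + 3 + 1) = ent X s i"
  unfolding ent_def by simp

lemma fst_flipb [simp]: "fst (flipb h) = fst h"
  unfolding flipb_def by simp

lemma side_in_E: "sqc_wf X \<Longrightarrow> s \<in> S X \<Longrightarrow> side X s i \<in> E X"
  unfolding sqc_wf_def by (metis ent_mod_4 mod_less_divisor zero_less_numeral)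

lemma in_common_sq_sides: "s \<in> S X \<Longrightarrow> in_common_sq X (side X s i) (side X s j)"
  unfolding in_common_sq_def by (metis ent_mod_4 mod_less_divisor zero_less_numeral)

text \<open>Vertices are embedded by \<open>\<phi>\<close> into a cube \<open>{0,1}\<^sup>\<nat>\<close>, each edge runs parallel to the
coordinate axis \<open>crd e\<close>, and every square is mapped onto a 2-face spanned by two coordinates
adjacent in the triangle-free graph \<open>adj\<close>.\<close>

locale cubical_labelling =
  fixes X :: "('v, 'e, 's) sqc" and \<phi> :: "'v \<Rightarrow> nat \<Rightarrow> bool" and crd :: "'e \<Rightarrow> nat"
    and col :: "'e \<Rightarrow> bool" and adj :: "nat \<Rightarrow> nat \<Rightarrow> bool"
  assumes wf: "sqc_wf X"
    and inj_label: "inj_on \<phi> (V X)"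
    and tgt_label: "\<And>e. e \<in> E X \<Longrightarrow> \<phi> (tgt X e) = flipc (crd e) (\<phi> (src X e))"
    and edge_unique: "\<And>e f. e \<in> E X \<Longrightarrow> f \<in> E X \<Longrightarrow> src X e = src X f \<Longrightarrow> crd e = crd f \<Longrightarrow> e = f"
    and opposite_crd: "\<And>s i. s \<in> S X \<Longrightarrow> crd (side X s (i + 2)) = crd (side X s i)"
    and opposite_src: "\<And>s i. s \<in> S X \<Longrightarrow>
      \<phi> (src X (side X s (i + 2))) = flipc (crd (side X s (i + 1))) (\<phi> (src X (side X s i)))"
    and consecutive_src: "\<And>s i k. s \<in> S X \<Longrightarrow> k \<noteq> crd (side X s i) \<Longrightarrow> k \<noteq> crd (side X s (i + 1)) \<Longrightarrow>
      \<phi> (src X (side X s i)) k = \<phi> (src X (side X s (i + 1))) k"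
    and opposite_orient: "\<And>s i. s \<in> S X \<Longrightarrow> snd (ent X s i) \<noteq> snd (ent X s (i + 2))"
    and consecutive_adj: "\<And>s i. s \<in> S X \<Longrightarrow> adj (crd (side X s i)) (crd (side X s (i + 1)))"
    and consecutive_col: "\<And>s i. s \<in> S X \<Longrightarrow> col (side X s i) \<noteq> col (side X s (i + 1))"
    and adj_sym: "\<And>a b. adj a b \<Longrightarrow> adj b a"
    and adj_irrefl: "\<And>a. \<not> adj a a"
    and adj_triangle_free: "\<And>a b c. adj a b \<Longrightarrow> adj a c \<Longrightarrow> adj b c \<Longrightarrow> False"
    and corner_inj: "\<And>s i s' i'. s \<in> S X \<Longrightarrow> i < 4 \<Longrightarrow> s' \<in> S X \<Longrightarrow> i' < 4 \<Longrightarrow>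
      corner_ends X s i = corner_ends X s' i' \<Longrightarrow> (s, i) = (s', i')"
begin

lemma src_in_V: "e \<in> E X \<Longrightarrow> src X e \<in> V X"
  using wf unfolding sqc_wf_def by auto

lemma src_eq_if_label_eq: "e \<in> E X \<Longrightarrow> f \<in> E X \<Longrightarrow> \<phi> (src X e) = \<phi> (src X f) \<Longrightarrow> src X e = src X f"
  using inj_label src_in_V by (auto dest: inj_onD)

lemma hyp_invariant:
  assumes "(e, f) \<in> hyp X"
  shows "crd f = crd e \<and> (\<forall>k. \<not> adj (crd e) k \<longrightarrow> \<phi> (src X f) k = \<phi> (src X e) k)"
  using assms unfolding hyp_def
proof (induction rule: rtrancl_induct)
  case (step f g)
  have "crd g = crd f \<and> (\<forall>k. \<not> adj (crd f) k \<longrightarrow> \<phi> (src X g) k = \<phi> (src X f) k)"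
    if fg: "(f, g) \<in> opp X \<or> (g, f) \<in> opp X" for f g
  proof -
    obtain s i where s: "s \<in> S X" and "{f, g} = {side X s i, side X s (i + 2)}"
      using fg unfolding opp_def by blast
    moreover have "k \<noteq> crd (side X s (i + 1))" if "\<not> adj (crd (side X s i)) k" for k
      using consecutive_adj[OF s, of i] that by auto
    ultimately show ?thesis
      using opposite_crd[OF s, of i] opposite_src[OF s, of i] by (auto simp: doubleton_eq_iff flipc_apply)
  qed
  with step show ?case by auto
qed simp

lemma hyp_crd: "(e, f) \<in> hyp X \<Longrightarrow> crd f = crd e"
  using hyp_invariant by blast

lemma hyp_src: "(e, f) \<in> hyp X \<Longrightarrow> \<not> adj (crd e) k \<Longrightarrow> \<phi> (src X f) k = \<phi> (src X e) k"
  using hyp_invariant by blast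

lemma two_sided: "two_sided_by X (\<lambda>_. True)"
  unfolding two_sided_by_def using opposite_orient by blast

lemma no_direct_self_osc: "\<not> direct_self_osc X (\<lambda>_. True)"
proof
  assume "direct_self_osc X (\<lambda>_. True)"
  then obtain e f where ef: "e \<in> E X" "f \<in> E X" "e \<noteq> f" "(e, f) \<in> hyp X"
    and touch: "src X e = src X f \<or> tgt X e = tgt X f"
    unfolding direct_self_osc_def ostart_def oend_def by auto
  have "crd f = crd e" using hyp_crd[OF ef(4)] .
  moreover have "src X e = src X f"
    using touch tgt_label[OF ef(1)] tgt_label[OF ef(2)] \<open>crd f = crd e\<close>
    by (metis ef(1,2) flipc_flipc src_eq_if_label_eq)
  ultimately show False using edge_unique[OF ef(1,2)] ef(3) by simp
qed

lemma col_corner: "s \<in> S X \<Longrightarrow> col (side X s (i + 3)) \<noteq> col (side X s i)"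
  using consecutive_col[of s "i + 3"] unfolding ent_add_3_1 .

lemma consec_adj:
  assumes "consec X e f"
  shows "adj (crd e) (crd f)"
proof -
  obtain s i where s: "s \<in> S X" and e: "side X s i = e"
    and f: "side X s (i + 1) = f \<or> side X s (i + 3) = f"
    using assms unfolding consec_def by auto
  have "adj (crd (side X s (i + 3))) (crd (side X s i))"
    using consecutive_adj[OF s, of "i + 3"] by (simp only: ent_add_3_1)
  then show ?thesis using f e consecutive_adj[OF s, of i] adj_sym by auto
qed

lemma no_self_intersection: "\<not> self_intersects X"
  unfolding self_intersects_def using hyp_crd consec_adj adj_irrefl by metis

lemma label_of_endpoint:
  "f \<in> E X \<Longrightarrow> v = src X f \<or> v = tgt X f \<Longrightarrow> k \<noteq> crd f \<Longrightarrow> \<phi> v k = \<phi> (src X f) k"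
  using tgt_label by (auto simp: flipc_apply)

text \<open>The key step against inter-osculation: by triangle-freeness every coordinate \<open>k\<close> other
than \<open>crd b\<close> is non-adjacent to \<open>crd a\<close> or to \<open>crd b\<close>, and in both cases the label can be carried
from \<open>src f\<close> to \<open>src a\<close> along a hyperplane, going through the common vertex of \<open>f\<close> and \<open>g\<close>
in the second case.\<close>

lemma src_label_off_partner:
  assumes ab: "adj (crd a) (crd b)"
    and agree: "\<And>k. k \<noteq> crd a \<Longrightarrow> k \<noteq> crd b \<Longrightarrow> \<phi> (src X a) k = \<phi> (src X b) k"
    and fg: "f \<in> E X" "g \<in> E X" "(a, f) \<in> hyp X" "(b, g) \<in> hyp X" "share_vertex X f g"
    and k: "k \<noteq> crd b"
  shows "\<phi> (src X f) k = \<phi> (src X a) k"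
proof (cases "adj (crd a) k")
  case False
  then show ?thesis using hyp_src[OF fg(3)] by simp
next
  case True
  then have "k \<noteq> crd a" "\<not> adj (crd b) k" using ab adj_irrefl adj_triangle_free by blast+
  obtain v where v: "v = src X f \<or> v = tgt X f" "v = src X g \<or> v = tgt X g"
    using fg(5) unfolding share_vertex_def by auto
  have "\<phi> (src X f) k = \<phi> v k"
    using label_of_endpoint[OF fg(1) v(1)] hyp_crd[OF fg(3)] \<open>k \<noteq> crd a\<close> by simp
  also have "\<dots> = \<phi> (src X g) k"
    using label_of_endpoint[OF fg(2) v(2)] hyp_crd[OF fg(4)] k by simp
  also have "\<dots> = \<phi> (src X b) k" using hyp_src[OF fg(4) \<open>\<not> adj (crd b) k\<close>] .
  also have "\<dots> = \<phi> (src X a) k" using agree \<open>k \<noteq> crd a\<close> k by simp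
  finally show ?thesis .
qed

lemma side_or_opposite:
  assumes s: "s \<in> S X" and f: "f \<in> E X" and crd: "crd f = crd (side X s i)"
    and agree: "\<And>k. k \<noteq> crd (side X s (i + 1)) \<Longrightarrow> \<phi> (src X f) k = \<phi> (src X (side X s i)) k"
  shows "f = side X s i \<or> f = side X s (i + 2)"
proof -
  have sides: "side X s j \<in> E X" for j using side_in_E[OF wf s] .
  have "\<phi> (src X f) = \<phi> (src X (side X s i)) \<or>
      \<phi> (src X f) = flipc (crd (side X s (i + 1))) (\<phi> (src X (side X s i)))"
    by (rule eq_flipc_if_agree_off) (rule agree)
  with opposite_src[OF s, of i]
  consider "\<phi> (src X f) = \<phi> (src X (side X s i))" | "\<phi> (src X f) = \<phi> (src X (side X s (i + 2)))"
    by auto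
  then show ?thesis
  proof cases
    case 1
    then show ?thesis using edge_unique[OF f sides] src_eq_if_label_eq[OF f sides] crd by blast
  next
    case 2
    then show ?thesis using edge_unique[OF f sides] src_eq_if_label_eq[OF f sides] crd opposite_crd[OF s]
      by metis
  qed
qed

lemma hyp_consecutive_share_vertex:
  assumes s: "s \<in> S X" and f: "f \<in> E X" "g \<in> E X"
    and hyp: "(side X s i, f) \<in> hyp X" "(side X s (i + 1), g) \<in> hyp X"
    and sv: "share_vertex X f g"
  shows "in_common_sq X f g"
proof -
  have ab: "adj (crd (side X s i)) (crd (side X s (i + 1)))" using consecutive_adj[OF s] .
  have gf: "share_vertex X g f" using sv unfolding share_vertex_def by auto
  have "f = side X s i \<or> f = side X s (i + 2)"
  proof (rule side_or_opposite[OF s f(1) hyp_crd[OF hyp(1)]])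
    show "\<phi> (src X f) k = \<phi> (src X (side X s i)) k" if "k \<noteq> crd (side X s (i + 1))" for k
      using src_label_off_partner[OF ab _ f hyp sv that] consecutive_src[OF s] by blast
  qed
  moreover have "g = side X s (i + 1) \<or> g = side X s (i + 1 + 2)"
  proof (rule side_or_opposite[OF s f(2) hyp_crd[OF hyp(2)]])
    show "\<phi> (src X g) k = \<phi> (src X (side X s (i + 1))) k" if "k \<noteq> crd (side X s (i + 1 + 1))" for k
      using src_label_off_partner[OF adj_sym[OF ab] _ f(2,1) hyp(2,1) gf] consecutive_src[OF s]
        opposite_crd[OF s, of i] that by (metis add.assoc one_add_one)
  qed
  ultimately show ?thesis using in_common_sq_sides[OF s] by blast
qed

lemma no_inter_osc: "\<not> inter_osc X"
proof
  assume "inter_osc X"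
  then obtain e1 e2 f1 f2 where f: "f1 \<in> E X" "f2 \<in> E X"
    and hyp: "(e1, f1) \<in> hyp X" "(e2, f2) \<in> hyp X" and c: "consec X e1 e2"
    and sv: "share_vertex X f1 f2" and not_common: "\<not> in_common_sq X f1 f2"
    unfolding inter_osc_def by blast
  obtain s i where s: "s \<in> S X" and e1: "side X s i = e1"
    and e2: "side X s (i + 1) = e2 \<or> side X s (i + 3) = e2"
    using c unfolding consec_def by auto
  from e2 have "in_common_sq X f1 f2"
  proof
    assume "side X s (i + 1) = e2"
    then show ?thesis using hyp_consecutive_share_vertex[OF s f, of i] hyp e1 sv by simp
  next
    assume "side X s (i + 3) = e2"
    moreover have "side X s (i + 3 + 1) = e1" using e1 by (simp only: ent_add_3_1)
    moreover have "share_vertex X f2 f1" using sv unfolding share_vertex_def by auto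
    ultimately have "in_common_sq X f2 f1"
      using hyp_consecutive_share_vertex[OF s f(2,1), of "i + 3"] hyp by simp
    then show ?thesis unfolding in_common_sq_def by blast
  qed
  with not_common show False ..
qed

lemma lnk_colours_differ: "lnk X h h' \<Longrightarrow> col (fst h) \<noteq> col (fst h')"
proof -
  assume "lnk X h h'"
  then obtain s i where s: "s \<in> S X" and ce: "{flipb (ent X s (i + 3)), ent X s i} = {h, h'}"
    unfolding lnk_def corner_ends_def by auto
  with col_corner[OF s, of i] show ?thesis by (auto simp: doubleton_eq_iff)
qed

text \<open>So links are bipartite, which rules out triangles in them.\<close>

lemma npc: "npc X"
  unfolding npc_def
proof (intro conjI ballI allI impI)
  fix s and i :: nat assume "s \<in> S X"
  then show "flipb (ent X s (i + 3)) \<noteq> ent X s i" using col_corner[of s i] by (metis fst_flipb)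
next
  show "\<not> (\<exists>h1 h2 h3. h1 \<noteq> h2 \<and> h2 \<noteq> h3 \<and> h1 \<noteq> h3 \<and> lnk X h1 h2 \<and> lnk X h2 h3 \<and> lnk X h1 h3)"
    using lnk_colours_differ by blast
qed (use corner_inj in blast)

theorem special: "special X"
  unfolding special_def
  using wf npc two_sided no_direct_self_osc no_self_intersection no_inter_osc by blast

end

section \<open>The cover \<open>\<widehat>K\<^sub>m\<close>\<close>

lemma flipc_flip_coord_in_orbit0:
  "x \<in> orbit0 m \<Longrightarrow> 1 \<le> i \<Longrightarrow> i \<le> 2 * m + 1 \<Longrightarrow> flipc (flip_coord m i x) x \<in> orbit0 m"
  using orbit0.step[of x m i] piA_eq_flipc[of i m x] by auto

lemma orbit0_support: "x \<in> orbit0 m \<Longrightarrow> x c \<Longrightarrow> c \<in> {1..2 * m + 1}"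
proof (induction rule: orbit0.induct)
  case (step x j)
  then show ?case
    using piA_eq_flipc[of j m x] flip_coord_range[of j m x] by (auto simp: flipc_apply split: if_splits)
qed simp

lemma finite_orbit0: "finite (orbit0 m)"
proof (rule finite_subset)
  show "orbit0 m \<subseteq> (\<lambda>A c. c \<in> A) ` Pow {1..2 * m + 1}"
  proof
    fix x assume "x \<in> orbit0 m"
    then have "x = (\<lambda>c. c \<in> {c. x c})" "{c. x c} \<in> Pow {1..2 * m + 1}"
      using orbit0_support by auto
    then show "x \<in> (\<lambda>A c. c \<in> A) ` Pow {1..2 * m + 1}" by blast
  qed
qed simp

lemma inv_into_orbit0_piA:
  assumes "x \<in> orbit0 m" "1 \<le> i" "i \<le> 2 * m + 1"
  shows "inv_into (orbit0 m) (piA m i) x = piA m i x"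
proof (rule inv_into_f_eq)
  show "inj_on (piA m i) (orbit0 m)" using assms(2,3) by (metis inj_onI piA_invol)
qed (use assms orbit0.step piA_invol in auto)

lemma Khat_V: "V (Khat m) = orbit0 m"
  and Khat_E: "E (Khat m) = orbit0 m \<times> {1..2 * m + 1}"
  and Khat_S: "S (Khat m) = orbit0 m \<times> {1..2 * m}"
  and Khat_src: "src (Khat m) = fst"
  and Khat_tgt: "tgt (Khat m) e = piA m (snd e) (fst e)"
  and Khat_bd: "bd (Khat m) (x, R) = walk (orbit0 m) (piA m) x (rel m R)"
  unfolding Khat_def action_cx_def by (simp_all add: case_prod_beta)

lemma Khat_finite: "finite_cx (Khat m)"
  unfolding finite_cx_def Khat_V Khat_E Khat_S using finite_orbit0 by simp

lemma Khat_connected: "connected_cx (Khat m)"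
proof -
  let ?R = "{(src (Khat m) e, tgt (Khat m) e) |e. e \<in> E (Khat m)} \<union>
            {(tgt (Khat m) e, src (Khat m) e) |e. e \<in> E (Khat m)}"
  have "((\<lambda>_. False), u) \<in> ?R\<^sup>* \<and> (u, (\<lambda>_. False)) \<in> ?R\<^sup>*" if "u \<in> orbit0 m" for u
    using that
  proof (induction rule: orbit0.induct)
    case (step x j)
    then have "(x, piA m j x) \<in> ?R" "(piA m j x, x) \<in> ?R"
      by (auto simp: Khat_E Khat_src Khat_tgt)
    with step show ?case by (meson rtrancl.rtrancl_into_rtrancl converse_rtrancl_into_rtrancl)
  qed simp
  then show ?thesis unfolding connected_cx_def Khat_V by (meson rtrancl_trans)
qed

definition square_bd :: "nat \<Rightarrow> (nat \<Rightarrow> bool) \<Rightarrow> nat \<Rightarrow> (((nat \<Rightarrow> bool) \<times> nat) \<times> bool) list" where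
  "square_bd m x R = (if R \<le> m then
     [((x, R), True), ((flipc (flip_coord m R x) x, Suc R), True),
      ((flipc (flip_coord m (Suc R) x) x, R), False), ((x, Suc R), False)]
   else
     [((flipc (flip_coord m (Suc R) x) x, Suc R), False),
      ((flipc (flip_coord m (Suc R) x) x, R - m), True),
      ((flipc (flip_coord m R x) (flipc (flip_coord m (Suc R) x) x), Suc R), True),
      ((x, R), False)])"

lemma Khat_bd_commutator:
  assumes x: "x \<in> orbit0 m" and R: "1 \<le> R" "R \<le> m"
  shows "bd (Khat m) (x, R) = square_bd m x R"
proof -
  let ?a = "flip_coord m R x" and ?b = "flip_coord m (Suc R) x"
  have b1: "flip_coord m (Suc R) (flipc ?a x) = ?b" using R by (rule flip_coord_succ_after)
  have a2: "flip_coord m R (flipc ?b (flipc ?a x)) = ?a"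
    using flip_coord_invol[of R m "flipc ?b x"] flip_coord_after_succ[OF R, of x] R
    by (simp add: flipc_commute)
  have x2: "flipc ?b (flipc ?a x) \<in> orbit0 m"
    using flipc_flip_coord_in_orbit0[OF flipc_flip_coord_in_orbit0[OF x], of R "Suc R"] b1 R by auto
  have x3: "flipc ?b x \<in> orbit0 m" using x R by (intro flipc_flip_coord_in_orbit0) auto
  have "inv_into (orbit0 m) (piA m R) (flipc ?b (flipc ?a x)) = flipc ?b x"
    using inv_into_orbit0_piA[OF x2, of R] R piA_eq_flipc[of R m] a2 by (simp add: flipc_commute)
  moreover have "inv_into (orbit0 m) (piA m (Suc R)) (flipc ?b x) = x"
    using inv_into_orbit0_piA[OF x3, of "Suc R"] R piA_eq_flipc[of "Suc R" m]
      flip_coord_invol[of "Suc R" m x] by simp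
  ultimately show ?thesis
    using R b1 piA_eq_flipc[of R m x] piA_eq_flipc[of "Suc R" m "flipc ?a x"]
    unfolding Khat_bd rel_def square_bd_def by (simp add: Let_def)
qed

lemma Khat_bd_conjugation:
  assumes x: "x \<in> orbit0 m" and R: "m < R" "R \<le> 2 * m"
  shows "bd (Khat m) (x, R) = square_bd m x R"
proof -
  define j where "j = R - m"
  have j: "1 \<le> j" "j \<le> m" "R = m + j" using R unfolding j_def by auto
  let ?H = "flip_coord m (Suc R) x" and ?Q = "flip_coord m R x"
  let ?y = "flipc ?H x"
  have y: "?y \<in> orbit0 m" using x R by (intro flipc_flip_coord_in_orbit0) auto
  have c1: "flip_coord m j ?y = ?Q" using flip_coord_conj[OF j(1,2), of x] j by simp
  have c2: "flip_coord m (Suc R) (flipc ?Q ?y) = ?H" using flip_coord_conj_back[OF j(1,2), of x] j by simp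
  have y3: "flipc ?Q x \<in> orbit0 m" using x R by (intro flipc_flip_coord_in_orbit0) auto
  have "inv_into (orbit0 m) (piA m (Suc R)) x = ?y"
    using inv_into_orbit0_piA[OF x, of "Suc R"] R piA_eq_flipc[of "Suc R" m x] by simp
  moreover have "inv_into (orbit0 m) (piA m R) (flipc ?Q x) = x"
    using inv_into_orbit0_piA[OF y3, of R] R piA_eq_flipc[of R m] flip_coord_invol[of R m x] by simp
  moreover have "flipc ?H (flipc ?Q ?y) = flipc ?Q x" by (simp add: flipc_commute)
  ultimately show ?thesis
    using R j c1 c2 piA_eq_flipc[of j m ?y] piA_eq_flipc[of "Suc R" m "flipc ?Q ?y"]
    unfolding Khat_bd rel_def square_bd_def by (simp add: Let_def)
qed

lemma Khat_bd_square_bd: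
  "x \<in> orbit0 m \<Longrightarrow> 1 \<le> R \<Longrightarrow> R \<le> 2 * m \<Longrightarrow> bd (Khat m) (x, R) = square_bd m x R"
  using Khat_bd_commutator Khat_bd_conjugation by (cases "R \<le> m") auto

lemma ent_Khat:
  "x \<in> orbit0 m \<Longrightarrow> 1 \<le> R \<Longrightarrow> R \<le> 2 * m \<Longrightarrow> ent (Khat m) (x, R) n = square_bd m x R ! (n mod 4)"
  unfolding ent_def by (simp add: Khat_bd_square_bd)

lemma square_bd_path:
  assumes x: "x \<in> orbit0 m" and R: "1 \<le> R" "R \<le> 2 * m" and r: "r < 4"
  defines "L \<equiv> square_bd m x R"
  shows "fst (L ! r) \<in> E (Khat m) \<and> hvtx (Khat m) (flipb (L ! r)) = hvtx (Khat m) (L ! ((r + 1) mod 4))"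
proof (cases "R \<le> m")
  case True
  let ?a = "flip_coord m R x" and ?b = "flip_coord m (Suc R) x"
  have "flipc ?a x \<in> orbit0 m" "flipc ?b x \<in> orbit0 m"
    using x R by (auto intro!: flipc_flip_coord_in_orbit0)
  moreover have "piA m R x = flipc ?a x" "piA m (Suc R) (flipc ?a x) = flipc ?b (flipc ?a x)"
    "piA m R (flipc ?b x) = flipc ?a (flipc ?b x)" "piA m (Suc R) x = flipc ?b x"
    using R True flip_coord_succ_after flip_coord_after_succ piA_eq_flipc[of R m] piA_eq_flipc[of "Suc R" m]
    by auto
  ultimately show ?thesis using less_4_cases[OF r] x R True
    by (elim disjE) (auto simp: L_def square_bd_def hvtx_def flipb_def Khat_E Khat_src Khat_tgt flipc_commute)
next
  case False
  define j where "j = R - m"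
  have j: "1 \<le> j" "j \<le> m" "R = m + j" using False R unfolding j_def by auto
  let ?H = "flip_coord m (Suc R) x" and ?Q = "flip_coord m R x"
  let ?y = "flipc ?H x"
  have y: "?y \<in> orbit0 m" using x R by (auto intro!: flipc_flip_coord_in_orbit0)
  have c1: "flip_coord m j ?y = ?Q" using flip_coord_conj[OF j(1,2), of x] j by simp
  have "flipc ?Q ?y \<in> orbit0 m" using flipc_flip_coord_in_orbit0[OF y, of j] c1 j by auto
  moreover have "piA m (Suc R) ?y = x" "piA m j ?y = flipc ?Q ?y"
    "piA m (Suc R) (flipc ?Q ?y) = flipc ?Q x" "piA m R x = flipc ?Q x"
    using R j c1 flip_coord_conj_back[OF j(1,2), of x] flip_coord_invol[of "Suc R" m x]
      piA_eq_flipc[of "Suc R" m] piA_eq_flipc[of j m] piA_eq_flipc[of R m]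
    by (auto simp: flipc_commute)
  ultimately show ?thesis using less_4_cases[OF r] x y R j False
    by (elim disjE) (auto simp: L_def square_bd_def hvtx_def flipb_def Khat_E Khat_src Khat_tgt)
qed

lemma Khat_wf: "sqc_wf (Khat m)"
  unfolding sqc_wf_def
proof (intro conjI ballI allI impI)
  fix e assume "e \<in> E (Khat m)"
  then show "src (Khat m) e \<in> V (Khat m)" "tgt (Khat m) e \<in> V (Khat m)"
    by (auto simp: Khat_E Khat_V Khat_src Khat_tgt intro!: orbit0.step)
next
  fix s assume "s \<in> S (Khat m)"
  then obtain x R where s: "s = (x, R)" and x: "x \<in> orbit0 m" and R: "1 \<le> R" "R \<le> 2 * m"
    by (auto simp: Khat_S)
  then show "length (bd (Khat m) s) = 4" by (simp add: Khat_bd_square_bd square_bd_def)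
  fix i :: nat assume "i < 4"
  then show "fst (ent (Khat m) s i) \<in> E (Khat m)"
    "hvtx (Khat m) (flipb (ent (Khat m) s i)) = hvtx (Khat m) (ent (Khat m) s (i + 1))"
    using square_bd_path[OF x R] s by (simp_all add: ent_Khat[OF x R])
qed

definition base_adj :: "nat \<Rightarrow> nat \<Rightarrow> nat \<Rightarrow> bool" where
  "base_adj m a b \<longleftrightarrow> (1 \<le> a \<and> b = Suc a \<and> a < m) \<or> (1 \<le> b \<and> a = Suc b \<and> b < m) \<or>
     (a = m \<and> b = 1) \<or> (a = 1 \<and> b = m) \<or> (a = m \<and> b = Suc m) \<or> (a = Suc m \<and> b = m)"

lemma base_adj_sym: "base_adj m a b \<Longrightarrow> base_adj m b a"
  unfolding base_adj_def by auto

lemma base_adj_irrefl: "m \<noteq> 1 \<Longrightarrow> \<not> base_adj m a a"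
  unfolding base_adj_def by auto

lemma base_adj_triangle_free:
  "m \<noteq> 1 \<Longrightarrow> m \<noteq> 3 \<Longrightarrow> base_adj m a b \<Longrightarrow> base_adj m a c \<Longrightarrow> base_adj m b c \<Longrightarrow> False"
  unfolding base_adj_def by (elim disjE conjE; linarith)

definition coord_adj :: "nat \<Rightarrow> nat \<Rightarrow> nat \<Rightarrow> bool" where
  "coord_adj m a b \<longleftrightarrow> base_adj m (base_coord m a) (base_coord m b)"

definition edge_coord :: "nat \<Rightarrow> (nat \<Rightarrow> bool) \<times> nat \<Rightarrow> nat" where
  "edge_coord m e = flip_coord m (snd e) (fst e)"

lemma base_coord_simps:
  "1 \<le> a \<Longrightarrow> a \<le> m \<Longrightarrow> base_coord m a = a"
  "m < a \<Longrightarrow> a \<le> 2 * m \<Longrightarrow> base_coord m a = a - m"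
  "base_coord m (Suc (2 * m)) = Suc m"
  unfolding base_coord_def by auto

lemma square_bd_labelling:
  assumes m: "even m" and x: "x \<in> orbit0 m" and R: "1 \<le> R" "R \<le> 2 * m" and r: "r < 4"
  defines "L \<equiv> square_bd m x R"
  defines "h \<equiv> \<lambda>k. L ! ((r + k) mod 4)"
  shows "edge_coord m (fst (h 2)) = edge_coord m (fst (h 0)) \<and>
    fst (fst (h 2)) = flipc (edge_coord m (fst (h 1))) (fst (fst (h 0))) \<and>
    (\<forall>k. k \<noteq> edge_coord m (fst (h 0)) \<longrightarrow> k \<noteq> edge_coord m (fst (h 1)) \<longrightarrow>
      fst (fst (h 0)) k = fst (fst (h 1)) k) \<and>
    snd (h 0) \<noteq> snd (h 2) \<and>
    coord_adj m (edge_coord m (fst (h 0))) (edge_coord m (fst (h 1))) \<and>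
    odd (snd (fst (h 0))) \<noteq> odd (snd (fst (h 1)))"
proof (cases "R \<le> m")
  case True
  let ?a = "flip_coord m R x" and ?b = "flip_coord m (Suc R) x"
  have "base_coord m ?a = R" using R True base_coord_flip_coord[of R m x] by (simp add: base_coord_simps)
  moreover have "base_coord m ?b = (if R < m then Suc R else 1)"
    using R True base_coord_flip_coord[of "Suc R" m x] by (auto simp: base_coord_def)
  moreover have "base_adj m R (if R < m then Suc R else 1)" "base_adj m (if R < m then Suc R else 1) R"
    using R True unfolding base_adj_def by auto
  ultimately show ?thesis using less_4_cases[OF r] R True
    by (elim disjE) (simp_all add: h_def L_def square_bd_def edge_coord_def coord_adj_def
        flip_coord_succ_after flip_coord_after_succ flipc_apply flipc_commute)
next
  case False
  define j where "j = R - m"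
  have j: "1 \<le> j" "j \<le> m" "R = m + j" using False R unfolding j_def by auto
  let ?H = "flip_coord m (Suc R) x" and ?Q = "flip_coord m R x"
  let ?y = "flipc ?H x"
  have "flip_coord m (Suc R) ?y = ?H" using R by (intro flip_coord_invol) auto
  moreover have "flip_coord m (R - m) ?y = ?Q" using flip_coord_conj[OF j(1,2), of x] j by simp
  moreover have "flip_coord m (Suc R) (flipc ?Q ?y) = ?H"
    using flip_coord_conj_back[OF j(1,2), of x] j by simp
  moreover have "base_coord m ?H = (if j < m then Suc j else Suc m)"
    using R j base_coord_flip_coord[of "Suc R" m x] by (auto simp: base_coord_def)
  moreover have "base_coord m ?Q = R - m" using R j base_coord_flip_coord[of R m x] by (auto simp: base_coord_def)
  moreover have "base_adj m (if j < m then Suc j else Suc m) (R - m)"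
    "base_adj m (R - m) (if j < m then Suc j else Suc m)"
    using j unfolding base_adj_def by auto
  moreover have "odd (Suc R) \<noteq> odd (R - m)" \<comment> \<open>the colouring needs \<open>m\<close> even\<close>
    using j m by auto
  ultimately show ?thesis using less_4_cases[OF r] False
    by (elim disjE)
      (simp_all add: h_def L_def square_bd_def edge_coord_def coord_adj_def flipc_apply flipc_commute)
qed

definition gen_label :: "(('x \<times> nat) \<times> bool) \<Rightarrow> nat \<times> bool" where
  "gen_label h = (snd (fst h), snd h)"

lemma gen_label_flipb: "gen_label (flipb h) = flipb (gen_label h)"
  unfolding gen_label_def flipb_def by simp

lemma gen_label_square_bd: "k < 4 \<Longrightarrow> gen_label (square_bd m x R ! k) = rel m R ! k"
  unfolding square_bd_def rel_def gen_label_def using less_4_cases[of k] by auto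

lemma rel_corner_inj:
  assumes "0 < m" "1 \<le> R" "R \<le> 2 * m" "1 \<le> R'" "R' \<le> 2 * m" "i < 4" "i' < 4"
    and "{flipb (rel m R ! ((i + 3) mod 4)), rel m R ! i} = {flipb (rel m R' ! ((i' + 3) mod 4)), rel m R' ! i'}"
  shows "R = R' \<and> i = i'"
  using less_4_cases[OF assms(6)] less_4_cases[OF assms(7)] assms
  by (elim disjE) (auto simp: rel_def flipb_def doubleton_eq_iff split: if_splits)

lemma rel_corner_distinct:
  "0 < m \<Longrightarrow> 1 \<le> R \<Longrightarrow> R \<le> 2 * m \<Longrightarrow> i < 4 \<Longrightarrow> fst (rel m R ! ((i + 3) mod 4)) \<noteq> fst (rel m R ! i)"
  using less_4_cases[of i] by (auto simp: rel_def)

lemma square_bd_vertex_inj: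
  assumes "1 \<le> R" "R \<le> 2 * m" "k < 4" "k \<noteq> 2"
    and "fst (fst (square_bd m x R ! k)) = fst (fst (square_bd m x' R ! k))"
  shows "x = x'"
proof -
  have inj: "\<And>i. 1 \<le> i \<Longrightarrow> i \<le> 2 * m + 1 \<Longrightarrow> piA m i x = piA m i x' \<Longrightarrow> x = x'"
    by (metis piA_invol)
  show ?thesis
  proof (cases "R \<le> m")
    case True
    have "k = 1 \<Longrightarrow> piA m R x = piA m R x'"
      using assms True piA_eq_flipc[of R m] unfolding square_bd_def by simp
    then show ?thesis using less_4_cases[OF assms(3)] assms True inj[of R] unfolding square_bd_def by auto
  next
    case False
    have "k = 0 \<or> k = 1 \<Longrightarrow> piA m (Suc R) x = piA m (Suc R) x'"
      using assms False piA_eq_flipc[of "Suc R" m] unfolding square_bd_def by auto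
    then show ?thesis using less_4_cases[OF assms(3)] assms False inj[of "Suc R"] unfolding square_bd_def by auto
  qed
qed

lemma Khat_corner_inj:
  assumes m: "0 < m" and x: "x \<in> orbit0 m" "x' \<in> orbit0 m"
    and R: "1 \<le> R" "R \<le> 2 * m" "1 \<le> R'" "R' \<le> 2 * m" and i: "i < 4" "i' < 4"
    and eq: "corner_ends (Khat m) (x, R) i = corner_ends (Khat m) (x', R') i'"
  shows "x = x' \<and> R = R' \<and> i = i'"
proof -
  let ?L = "square_bd m x R" and ?L' = "square_bd m x' R'"
  let ?a = "flipb (?L ! ((i + 3) mod 4))" and ?b = "?L ! i"
  let ?a' = "flipb (?L' ! ((i' + 3) mod 4))" and ?b' = "?L' ! i'"
  have ce: "{?a, ?b} = {?a', ?b'}"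
    using eq i unfolding corner_ends_def ent_Khat[OF x(1) R(1,2)] ent_Khat[OF x(2) R(3,4)] by simp
  then have "gen_label ` {?a, ?b} = gen_label ` {?a', ?b'}" by simp
  then have "R = R' \<and> i = i'"
    using rel_corner_inj[OF m R i] i by (simp add: gen_label_flipb gen_label_square_bd)
  moreover have "fst (gen_label ?a) \<noteq> fst (gen_label ?b)"
    using rel_corner_distinct[OF m R(1,2) i(1)] i
    by (simp only: gen_label_flipb gen_label_square_bd mod_less_divisor zero_less_numeral fst_flipb
        not_False_eq_True)
  moreover have "gen_label ?a = gen_label ?a'" "gen_label ?b = gen_label ?b'"
    if "R = R' \<and> i = i'" using that i by (simp_all add: gen_label_flipb gen_label_square_bd)
  ultimately have "?a = ?a' \<and> ?b = ?b'"
    using ce by (auto simp: doubleton_eq_iff)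
  then have "?L ! ((i + 3) mod 4) = ?L' ! ((i + 3) mod 4)" "?L ! i = ?L' ! i"
    using \<open>R = R' \<and> i = i'\<close> by (auto simp: flipb_def prod_eq_iff)
  then have "x = x'"
    using square_bd_vertex_inj[OF R(1,2), of 1 x x'] square_bd_vertex_inj[OF R(1,2), of i x x'] i
      \<open>R = R' \<and> i = i'\<close>
    by (cases "i = 2") auto
  with \<open>R = R' \<and> i = i'\<close> show ?thesis by simp
qed

lemma ent_shift_mod_4: "ent X s (i + k) = ent X s (i mod 4 + k)"
  unfolding ent_def by (simp add: mod_add_left_eq)

lemma Khat_labelling:
  assumes m: "even m" "0 < m"
  shows "cubical_labelling (Khat m) id (edge_coord m) (\<lambda>e. odd (snd e)) (coord_adj m)"
proof
  show "sqc_wf (Khat m)" by (rule Khat_wf)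
  show "inj_on id (V (Khat m))" by simp
next
  fix e assume "e \<in> E (Khat m)"
  then show "id (tgt (Khat m) e) = flipc (edge_coord m e) (id (src (Khat m) e))"
    by (auto simp: Khat_E Khat_src Khat_tgt edge_coord_def piA_eq_flipc)
next
  fix e f assume "e \<in> E (Khat m)" "f \<in> E (Khat m)" "src (Khat m) e = src (Khat m) f"
    "edge_coord m e = edge_coord m f"
  then show "e = f" by (auto simp: Khat_E Khat_src edge_coord_def intro: flip_coord_inj)
next
  fix a b assume "coord_adj m a b" then show "coord_adj m b a"
    unfolding coord_adj_def by (rule base_adj_sym)
next
  have "m \<noteq> 1" "m \<noteq> 3" using m by auto
  then show "\<not> coord_adj m a a" "\<And>a b c. coord_adj m a b \<Longrightarrow> coord_adj m a c \<Longrightarrow> coord_adj m b c \<Longrightarrow> False"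
    for a unfolding coord_adj_def using base_adj_irrefl base_adj_triangle_free by blast+
next
  fix s i s' i' assume "s \<in> S (Khat m)" "i < 4" "s' \<in> S (Khat m)" "i' < 4"
    "corner_ends (Khat m) s i = corner_ends (Khat m) s' i'"
  then show "(s, i) = (s', i')" using Khat_corner_inj m by (auto simp: Khat_S)
next
  fix s and i :: nat assume "s \<in> S (Khat m)"
  then obtain x R where s: "s = (x, R)" and x: "x \<in> orbit0 m" and R: "1 \<le> R" "R \<le> 2 * m"
    by (auto simp: Khat_S)
  have e: "ent (Khat m) s (i + k) = square_bd m x R ! ((i mod 4 + k) mod 4)" for k
    using s ent_shift_mod_4 ent_Khat[OF x R] by metis
  note facts = square_bd_labelling[OF m(1) x R, of "i mod 4", unfolded e[symmetric]]
  show "edge_coord m (side (Khat m) s (i + 2)) = edge_coord m (side (Khat m) s i)"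
    and "id (src (Khat m) (side (Khat m) s (i + 2))) =
      flipc (edge_coord m (side (Khat m) s (i + 1))) (id (src (Khat m) (side (Khat m) s i)))"
    and "snd (ent (Khat m) s i) \<noteq> snd (ent (Khat m) s (i + 2))"
    and "coord_adj m (edge_coord m (side (Khat m) s i)) (edge_coord m (side (Khat m) s (i + 1)))"
    and "odd (snd (side (Khat m) s i)) \<noteq> odd (snd (side (Khat m) s (i + 1)))"
    and "\<And>k. k \<noteq> edge_coord m (side (Khat m) s i) \<Longrightarrow> k \<noteq> edge_coord m (side (Khat m) s (i + 1)) \<Longrightarrow>
      id (src (Khat m) (side (Khat m) s i)) k = id (src (Khat m) (side (Khat m) s (i + 1))) k"
    using facts by (simp_all add: Khat_src)
qed

section \<open>Relabelling a square complex\<close>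

definition relabel :: "('v \<Rightarrow> 'w) \<Rightarrow> ('e \<Rightarrow> 'f) \<Rightarrow> ('s \<Rightarrow> 't) \<Rightarrow> ('v, 'e, 's) sqc \<Rightarrow> ('w, 'f, 't) sqc" where
  "relabel gV gE gS Y = \<lparr> V = gV ` V Y, E = gE ` E Y, S = gS ` S Y,
     src = (\<lambda>e. gV (src Y (inv_into (E Y) gE e))), tgt = (\<lambda>e. gV (tgt Y (inv_into (E Y) gE e))),
     bd = (\<lambda>s. map (\<lambda>(e, b). (gE e, b)) (bd Y (inv_into (S Y) gS s))) \<rparr>"

locale relabelling =
  fixes Y :: "('v, 'e, 's) sqc" and gV :: "'v \<Rightarrow> 'w" and gE :: "'e \<Rightarrow> 'f" and gS :: "'s \<Rightarrow> 't"
  assumes inj_V: "inj_on gV (V Y)" and inj_E: "inj_on gE (E Y)" and inj_S: "inj_on gS (S Y)"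
    and wf: "sqc_wf Y"
begin

abbreviation "Z \<equiv> relabel gV gE gS Y"
abbreviation "hE \<equiv> \<lambda>(e, b). (gE e, b)"
abbreviation "fV \<equiv> inv_into (V Y) gV"
abbreviation "fE \<equiv> inv_into (E Y) gE"
abbreviation "fS \<equiv> inv_into (S Y) gS"

lemma relabel_V: "V Z = gV ` V Y"
  and relabel_E: "E Z = gE ` E Y"
  and relabel_S: "S Z = gS ` S Y"
  unfolding relabel_def by simp_all

lemma relabel_src: "e \<in> E Y \<Longrightarrow> src Z (gE e) = gV (src Y e)"
  and relabel_tgt: "e \<in> E Y \<Longrightarrow> tgt Z (gE e) = gV (tgt Y e)"
  and relabel_bd: "s \<in> S Y \<Longrightarrow> bd Z (gS s) = map hE (bd Y s)"
  unfolding relabel_def using inj_E inj_S by simp_all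

lemma inv_V [simp]: "v \<in> V Y \<Longrightarrow> fV (gV v) = v"
  and inv_E [simp]: "e \<in> E Y \<Longrightarrow> fE (gE e) = e"
  and inv_S [simp]: "s \<in> S Y \<Longrightarrow> fS (gS s) = s"
  using inj_V inj_E inj_S by simp_all

lemma src_in_V: "e \<in> E Y \<Longrightarrow> src Y e \<in> V Y"
  and tgt_in_V: "e \<in> E Y \<Longrightarrow> tgt Y e \<in> V Y"
  and length_bd: "s \<in> S Y \<Longrightarrow> length (bd Y s) = 4"
  using wf unfolding sqc_wf_def by auto

lemma relabel_ent: "s \<in> S Y \<Longrightarrow> ent Z (gS s) i = hE (ent Y s i)"
  unfolding ent_def by (simp add: relabel_bd length_bd)

lemma relabel_side: "s \<in> S Y \<Longrightarrow> side Z (gS s) i = gE (side Y s i)"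
  by (simp add: relabel_ent case_prod_beta)

lemma relabel_hvtx: "fst h \<in> E Y \<Longrightarrow> hvtx Z (hE h) = gV (hvtx Y h)"
  unfolding hvtx_def by (cases h) (simp add: relabel_src relabel_tgt)

lemma hE_flipb: "hE (flipb h) = flipb (hE h)"
  unfolding flipb_def by (cases h) simp

lemma hvtx_in_V: "fst h \<in> E Y \<Longrightarrow> hvtx Y h \<in> V Y"
  unfolding hvtx_def using src_in_V tgt_in_V by simp

lemma wf_relabel: "sqc_wf Z"
  unfolding sqc_wf_def
proof (intro conjI ballI allI impI)
  fix e assume "e \<in> E Z"
  then show "src Z e \<in> V Z" "tgt Z e \<in> V Z"
    using src_in_V tgt_in_V by (auto simp: relabel_E relabel_V relabel_src relabel_tgt)
next
  fix s assume "s \<in> S Z"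
  then obtain s0 where s: "s = gS s0" "s0 \<in> S Y" by (auto simp: relabel_S)
  then show "length (bd Z s) = 4" by (simp add: relabel_bd length_bd)
  fix i :: nat assume "i < 4"
  then have "hvtx Y (flipb (ent Y s0 i)) = hvtx Y (ent Y s0 (i + 1))"
    using wf s unfolding sqc_wf_def by auto
  then show "hvtx Z (flipb (ent Z s i)) = hvtx Z (ent Z s (i + 1))"
    using s side_in_E[OF wf] by (simp add: relabel_ent relabel_hvtx hE_flipb[symmetric])
  show "fst (ent Z s i) \<in> E Z" using s side_in_E[OF wf] by (simp add: relabel_side relabel_E)
qed

lemma finite_relabel: "finite_cx Y \<Longrightarrow> finite_cx Z"
  unfolding finite_cx_def by (simp add: relabel_V relabel_E relabel_S)

lemma connected_relabel:
  assumes "connected_cx Y"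
  shows "connected_cx Z"
proof -
  let ?R = "\<lambda>X. {(src X e, tgt X e) |e. e \<in> E X} \<union> {(tgt X e, src X e) |e. e \<in> E X}"
  have "(gV (src Y e), gV (tgt Y e)) \<in> ?R Z \<and> (gV (tgt Y e), gV (src Y e)) \<in> ?R Z"
    if "e \<in> E Y" for e
  proof -
    have "gE e \<in> E Z" using that by (simp add: relabel_E)
    then show ?thesis using relabel_src[OF that] relabel_tgt[OF that] by force
  qed
  then have edge: "(gV a, gV b) \<in> ?R Z" if "(a, b) \<in> ?R Y" for a b
    using that by blast
  have "(gV u, gV w) \<in> (?R Z)\<^sup>*" if "(u, w) \<in> (?R Y)\<^sup>*" for u w
    using that
  proof (induction rule: rtrancl_induct)
    case (step y z)
    from step.IH edge[OF step.hyps(2)] show ?case by (rule rtrancl_into_rtrancl)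
  qed simp
  then show ?thesis using assms unfolding connected_cx_def relabel_V by blast
qed

lemma relabel_edges_from: "v \<in> V Y \<Longrightarrow> {e \<in> E Z. src Z e = gV v} = gE ` {e \<in> E Y. src Y e = v}"
  by (auto simp: relabel_E relabel_src inj_on_eq_iff[OF inj_V] src_in_V)

lemma relabel_edges_to: "v \<in> V Y \<Longrightarrow> {e \<in> E Z. tgt Z e = gV v} = gE ` {e \<in> E Y. tgt Y e = v}"
  by (auto simp: relabel_E relabel_tgt inj_on_eq_iff[OF inj_V] tgt_in_V)

lemma relabel_corners:
  assumes "v \<in> V Y"
  shows "corners Z (gV v) = (\<lambda>(s, i). (gS s, i)) ` corners Y v"
proof -
  have "hvtx Z (ent Z (gS s) i) = gV (hvtx Y (ent Y s i))" if "s \<in> S Y" for s i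
    using that side_in_E[OF wf] by (simp add: relabel_ent relabel_hvtx)
  moreover have "gV (hvtx Y (ent Y s i)) = gV v \<longleftrightarrow> hvtx Y (ent Y s i) = v" if "s \<in> S Y" for s i
    using that assms hvtx_in_V side_in_E[OF wf] by (simp add: inj_on_eq_iff[OF inj_V])
  ultimately show ?thesis unfolding corners_def by (auto simp: relabel_S)
qed

lemma covering_map_relabel: "covering_map Z Y fV fE fS"
  unfolding covering_map_def
proof (intro conjI ballI)
  fix e assume "e \<in> E Z"
  then show "src Y (fE e) = fV (src Z e)" "tgt Y (fE e) = fV (tgt Z e)"
    by (auto simp: relabel_E relabel_src relabel_tgt src_in_V tgt_in_V)
next
  fix s assume "s \<in> S Z"
  then obtain s0 where s: "s = gS s0" "s0 \<in> S Y" by (auto simp: relabel_S)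
  have "fst h \<in> E Y" if "h \<in> set (bd Y s0)" for h
    using that s(2) side_in_E[OF wf] length_bd unfolding ent_def by (metis in_set_conv_nth mod_less)
  then have "map (\<lambda>(e, b). (fE e, b)) (map hE (bd Y s0)) = bd Y s0"
    unfolding map_map by (intro map_idI) auto
  then show "bd Y (fS s) = map (\<lambda>(e, b). (fE e, b)) (bd Z s)" using s by (simp add: relabel_bd)
next
  fix v assume "v \<in> V Z"
  then obtain v0 where v: "v = gV v0" "v0 \<in> V Y" by (auto simp: relabel_V)
  have bij: "bij_betw gE (E Y) (gE ` E Y)" using inj_E by (rule inj_on_imp_bij_betw)
  show "bij_betw fE {e \<in> E Z. src Z e = v} {e \<in> E Y. src Y e = fV v}"
    "bij_betw fE {e \<in> E Z. tgt Z e = v} {e \<in> E Y. tgt Y e = fV v}"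
    using v relabel_edges_from relabel_edges_to by (auto intro: bij_betw_inv_into_subset[OF bij])
  show "bij_betw (\<lambda>(s, i). (fS s, i)) (corners Z v) (corners Y (fV v))"
    unfolding v(1) relabel_corners[OF v(2)] inv_V[OF v(2)]
    by (rule bij_betw_byWitness[where f' = "\<lambda>(s, i). (gS s, i)"]) (auto simp: corners_def)
qed (auto simp: relabel_V relabel_E relabel_S)


lemma relabel_corner_ends: "s \<in> S Y \<Longrightarrow> corner_ends Z (gS s) i = hE ` corner_ends Y s i"
  unfolding corner_ends_def by (simp add: relabel_ent hE_flipb)

lemma relabel_corner_ends_eq:
  assumes "s \<in> S Y" "s' \<in> S Y" "corner_ends Z (gS s) i = corner_ends Z (gS s') i'"
  shows "corner_ends Y s i = corner_ends Y s' i'"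
proof -
  have inj: "inj_on hE (E Y \<times> UNIV)" using inj_E by (auto simp: inj_on_def)
  have sub: "corner_ends Y t j \<subseteq> E Y \<times> UNIV" if "t \<in> S Y" for t j
    using that side_in_E[OF wf] unfolding corner_ends_def by (auto simp: flipb_def mem_Times_iff)
  show ?thesis
    using assms inj_on_image_eq_iff[OF inj sub[OF assms(1)] sub[OF assms(2)]]
    by (simp add: relabel_corner_ends)
qed

lemma inv_relabel_side: "s \<in> S Y \<Longrightarrow> fE (side Z (gS s) k) = side Y s k"
  using side_in_E[OF wf] by (simp add: relabel_side)

lemma inv_relabel_src_side: "s \<in> S Y \<Longrightarrow> fV (src Z (side Z (gS s) k)) = src Y (side Y s k)"
  using side_in_E[OF wf] src_in_V by (simp add: relabel_side relabel_src)

lemma labelling_relabel: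
  assumes "cubical_labelling Y \<phi> crd col adj"
  shows "cubical_labelling Z (\<lambda>v. \<phi> (fV v)) (\<lambda>e. crd (fE e)) (\<lambda>e. col (fE e)) adj"
proof -
  interpret Y: cubical_labelling Y \<phi> crd col adj by (rule assms)
  show ?thesis
  proof
    show "sqc_wf Z" by (rule wf_relabel)
    show "inj_on (\<lambda>v. \<phi> (fV v)) (V Z)"
      using Y.inj_label by (auto simp: relabel_V inj_on_def)
  next
    fix e assume "e \<in> E Z"
    then show "\<phi> (fV (tgt Z e)) = flipc (crd (fE e)) (\<phi> (fV (src Z e)))"
      using Y.tgt_label src_in_V tgt_in_V by (auto simp: relabel_E relabel_src relabel_tgt)
  next
    fix e f assume ef: "e \<in> E Z" "f \<in> E Z" "src Z e = src Z f" "crd (fE e) = crd (fE f)"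
    then obtain e0 f0 where e0: "e = gE e0" "e0 \<in> E Y" and f0: "f = gE f0" "f0 \<in> E Y"
      by (auto simp: relabel_E)
    have "gV (src Y e0) = gV (src Y f0)" using ef(3) e0 f0 by (simp add: relabel_src)
    then have "src Y e0 = src Y f0" by (rule inj_onD[OF inj_V]) (simp_all add: src_in_V e0 f0)
    with ef(4) e0 f0 show "e = f" using Y.edge_unique[OF e0(2) f0(2)] by simp
  next
    fix s and i k :: nat assume "s \<in> S Z"
    then obtain s0 where s: "s = gS s0" "s0 \<in> S Y" by (auto simp: relabel_S)
    have orient: "snd (ent Z s j) = snd (ent Y s0 j)" for j
      using s by (simp add: relabel_ent case_prod_beta)
    show "crd (fE (side Z s (i + 2))) = crd (fE (side Z s i))"
      unfolding s(1) inv_relabel_side[OF s(2)] by (rule Y.opposite_crd[OF s(2)])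
    show "\<phi> (fV (src Z (side Z s (i + 2)))) =
        flipc (crd (fE (side Z s (i + 1)))) (\<phi> (fV (src Z (side Z s i))))"
      unfolding s(1) inv_relabel_side[OF s(2)] inv_relabel_src_side[OF s(2)]
      by (rule Y.opposite_src[OF s(2)])
    show "snd (ent Z s i) \<noteq> snd (ent Z s (i + 2))"
      unfolding orient by (rule Y.opposite_orient[OF s(2)])
    show "adj (crd (fE (side Z s i))) (crd (fE (side Z s (i + 1))))"
      unfolding s(1) inv_relabel_side[OF s(2)] by (rule Y.consecutive_adj[OF s(2)])
    show "col (fE (side Z s i)) \<noteq> col (fE (side Z s (i + 1)))"
      unfolding s(1) inv_relabel_side[OF s(2)] by (rule Y.consecutive_col[OF s(2)])
    show "\<phi> (fV (src Z (side Z s i))) k = \<phi> (fV (src Z (side Z s (i + 1)))) k"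
      if "k \<noteq> crd (fE (side Z s i))" "k \<noteq> crd (fE (side Z s (i + 1)))"
      using that unfolding s(1) inv_relabel_side[OF s(2)] inv_relabel_src_side[OF s(2)]
      by (rule Y.consecutive_src[OF s(2)])
  next
    fix s i s' i' assume a: "s \<in> S Z" "i < 4" "s' \<in> S Z" "i' < 4" "corner_ends Z s i = corner_ends Z s' i'"
    then obtain s0 s0' where s: "s = gS s0" "s0 \<in> S Y" "s' = gS s0'" "s0' \<in> S Y"
      by (auto simp: relabel_S)
    then have "corner_ends Y s0 i = corner_ends Y s0' i'"
      using a(5) by (intro relabel_corner_ends_eq) simp_all
    then show "(s, i) = (s', i')" using Y.corner_inj[OF s(2) a(2) s(4) a(4)] s by simp
  qed (use Y.adj_sym Y.adj_irrefl Y.adj_triangle_free in blast)+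
qed

end

lemma exists_special_nat_cover:
  assumes "even m" "0 < m"
  shows "\<exists>(X :: (nat, nat, nat) sqc) fV fE fS. finite_cover X (Khat m) fV fE fS \<and> special X"
proof -
  let ?Y = "Khat m"
  let ?gV = "to_nat_on (V ?Y)" and ?gE = "to_nat_on (E ?Y)" and ?gS = "to_nat_on (S ?Y)"
  have "finite (V ?Y)" "finite (E ?Y)" "finite (S ?Y)" using Khat_finite unfolding finite_cx_def by auto
  then interpret relabelling ?Y ?gV ?gE ?gS
    by unfold_locales (auto intro: inj_on_to_nat_on countable_finite Khat_wf)
  have "V ?Y \<noteq> {}" by (auto simp: Khat_V intro: orbit0.base)
  then have "finite_cover Z ?Y fV fE fS"
    unfolding finite_cover_def
    using wf_relabel finite_relabel[OF Khat_finite] connected_relabel[OF Khat_connected]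
      covering_map_relabel by (simp add: relabel_V)
  moreover have "special Z"
    using cubical_labelling.special[OF labelling_relabel[OF Khat_labelling[OF assms]]] .
  ultimately show ?thesis by blast
qed

section \<open>The VH-structures\<close>

text \<open>Generators with odd index are vertical, those with even index horizontal; in the
relator \<open>a\<^sub>m\<^sub>+\<^sub>j\<^sub>+\<^sub>1\<^sup>-\<^sup>1 a\<^sub>j a\<^sub>m\<^sub>+\<^sub>j\<^sub>+\<^sub>1 a\<^sub>m\<^sub>+\<^sub>j\<^sup>-\<^sup>1\<close> this needs \<open>m\<close> even.\<close>

lemma rel_alternating_parity:
  assumes "even m" "1 \<le> R" "R \<le> 2 * m"
  shows "\<exists>k\<in>{0, 1::nat}. \<forall>i<4. odd (fst (rel m R ! ((i + k) mod 4))) \<longleftrightarrow> even i"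
proof -
  have all4: "(\<forall>i<4. P i) \<longleftrightarrow> P 0 \<and> P 1 \<and> P 2 \<and> P (3::nat)" for P
    using less_4_cases by fastforce
  show ?thesis
  proof (cases "R \<le> m")
    case True
    then show ?thesis unfolding rel_def all4 by (cases "odd R") (auto intro: bexI[of _ 0] bexI[of _ 1])
  next
    case False
    then have "odd (R - m) \<longleftrightarrow> odd R" using assms by auto
    with False show ?thesis
      unfolding rel_def all4 by (cases "odd R") (auto intro: bexI[of _ 0] bexI[of _ 1])
  qed
qed

lemma VH_Kmm: "even m \<Longrightarrow> is_VH (Kmm m)"
  unfolding is_VH_def
proof (intro exI conjI ballI)
  let ?Vt = "{i \<in> {1..2 * m + 1}. odd i}" and ?Ht = "{i \<in> {1..2 * m + 1}. even i}"
  show "?Vt \<union> ?Ht = E (Kmm m)" "?Vt \<inter> ?Ht = {}" by (auto simp: Kmm_def)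
  fix s assume "even m" "s \<in> S (Kmm m)"
  then have R: "1 \<le> s" "s \<le> 2 * m" by (auto simp: Kmm_def)
  obtain k where "k \<in> {0, 1}" "\<forall>i<4. odd (fst (rel m s ! ((i + k) mod 4))) \<longleftrightarrow> even i"
    using rel_alternating_parity[OF \<open>even m\<close> R] by blast
  moreover have "fst (rel m s ! (n mod 4)) \<in> {1..2 * m + 1}" for n
    using less_4_cases[of "n mod 4"] R by (auto simp: rel_def)
  ultimately show "\<exists>k\<in>{0, 1}. \<forall>i<4. fst (ent (Kmm m) s (i + k)) \<in> (if even i then ?Vt else ?Ht)"
    by (intro bexI[of _ k]) (auto simp: ent_def Kmm_def)
qed

lemma VH_Khat: "even m \<Longrightarrow> is_VH (Khat m)"
  unfolding is_VH_def
proof (intro exI conjI ballI)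
  let ?Vt = "{e \<in> E (Khat m). odd (snd e)}" and ?Ht = "{e \<in> E (Khat m). even (snd e)}"
  show "?Vt \<union> ?Ht = E (Khat m)" "?Vt \<inter> ?Ht = {}" by auto
  fix s assume "even m" "s \<in> S (Khat m)"
  then obtain x R where s: "s = (x, R)" and x: "x \<in> orbit0 m" and R: "1 \<le> R" "R \<le> 2 * m"
    by (auto simp: Khat_S)
  have "snd (side (Khat m) s n) = fst (rel m R ! (n mod 4))" for n
    using gen_label_square_bd[of "n mod 4" m x R] unfolding s ent_Khat[OF x R] gen_label_def
    by (simp add: prod_eq_iff)
  then show "\<exists>k\<in>{0, 1}. \<forall>i<4. side (Khat m) s (i + k) \<in> (if even i then ?Vt else ?Ht)"
    using rel_alternating_parity[OF \<open>even m\<close> R] side_in_E[OF Khat_wf \<open>s \<in> S (Khat m)\<close>] by auto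
qed

theorem proposition6p6:
  fixes m :: nat
  assumes "even m" and "0 < m"
  shows "is_VH (Kmm m) \<and> is_VH (Khat m) \<and>
         (\<exists>(X :: (nat, nat, nat) sqc) fV fE fS.
             finite_cover X (Khat m) fV fE fS \<and> special X)"
  using VH_Kmm[OF assms(1)] VH_Khat[OF assms(1)] exists_special_nat_cover[OF assms] by blast

end
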